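(* Let $\Sigma_\pm$ be nondecreasing scalar functions satisfying $\int_\mathbb R (1+t^2)^{-1}d\Sigma_\pm<\infty$, $\int_\mathbb R d\Sigma_\pm=\infty$, $\Sigma_\pm(t)=\frac12(\Sigma_\pm(t-0)+\Sigma_\pm(t+0))$, $\Sigma_\pm(0)=0$, and let $C_\pm$ be real constants such that \[ \int_\mathbb R (1+|t|)^{-1} d\Sigma_\pm < \infty , \qquad C_\pm = \int_\mathbb R t(1+t^2)^{-1} d\Sigma_\pm . \] Then for $\widehat A = \widehat A \{ \Sigma_+ , C_+ , \Sigma_- , C_- \}$: 1) If $\lambda \in \mathfrak{A}_0 (\Sigma_+) \cup \mathfrak{A}_0 (\Sigma_-)$, then $ \lambda \not \in \sigma_p (\widehat A)$. 2) If $\lambda \in \mathfrak{A}_p (\Sigma_+) \cap \mathfrak{A}_p (\Sigma_-)$, then (i) $\lambda$ is an eigenvalue of $\widehat A$ of geometric multiplicity 1; (ii) $\lambda$ is simple if and only if at least one of the following fails: \[ d\Sigma_- (\{ \lambda \} ) = d\Sigma_+ ( \{ \lambda \} ),\quad \int_{\mathbb R \setminus \{\lambda \}} \frac{d \Sigma_+ (t)}{|t-\lambda |^2} < \infty ,\quad \int_{\mathbb R \setminus \{\lambda \}} \frac{d \Sigma_- (t)}{|t-\lambda |^2} < \infty ; \] (iii) if these three conditions hold, the algebraic multiplicity of $\lambda$ is the greatest $k\in\{2,3,\dots\}\cup\{+\infty\}$ such that \[ \int_{\mathbb R \setminus \{\lambda \}} \frac{d \Sigma_\pm (t)}{|t-\lambda|^{2j}}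 < \infty ,\qquad \int_{\mathbb R \setminus \{\lambda \}} \frac{d\Sigma_- (t)}{(t-\lambda )^{j-1}} = \int_{\mathbb R \setminus \{\lambda \}} \frac{d\Sigma_+ (t)}{(t-\lambda )^{j-1}} \] hold for all natural $2 \leq j \leq k-1$ (in particular $k=2$ if one of them fails for $j=2$). 3) If $\lambda \in \mathfrak{A}_r (\Sigma_+) \cap \mathfrak{A}_r (\Sigma_-)$, then $\lambda \in \sigma_p (\widehat A)$ iff $\int_\mathbb R \frac{d\Sigma_+ (t)}{t-\lambda} = \int_\mathbb R \frac{d\Sigma_- (t)}{t-\lambda}$. In this case the geometric multiplicity is 1 and the algebraic multiplicity is the greatest $k\in\{1,2,\dots\}\cup\{+\infty\}$ such that $\int_{\mathbb R} |t-\lambda |^{-2j} d \Sigma_\pm (t) < \infty$ and $\int_{\mathbb R } (t-\lambda )^{-j} d\Sigma_- (t) = \int_{\mathbb R } (t-\lambda )^{-j} d\Sigma_+ (t)$ for all $1 \leq j \leq k$. 4) If $\lambda \in \mathfrak{A}_p (\Sigma_+) \cap \mathfrak{A}_r (\Sigma_-)$ or $\lambda \in \mathfrak{A}_p (\Sigma_-) \cap \mathfrak{A}_r (\Sigma_+)$, then $\lambda \not \in \sigma_p (\widehat A)$.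
   Context: $Q_\Sigma$ is multiplication by $t$ in $L^2(\mathbb R,d\Sigma)$ on its natural domain; $\sigma_c(S):=\{\lambda\notin\sigma_p(S): \operatorname{ran}(S-\lambda)\ne\overline{\operatorname{ran}(S-\lambda)}=H\}$. Sets: $\mathfrak A_0(\Sigma)=\{\lambda\in\sigma_c(Q_\Sigma): \int|t-\lambda|^{-2}d\Sigma=\infty\}$, $\mathfrak A_r(\Sigma)=\{\lambda\notin\sigma_p(Q_\Sigma):\int|t-\lambda|^{-2}d\Sigma<\infty\}$, $\mathfrak A_p(\Sigma)=\sigma_p(Q_\Sigma)$ (the jump points of $\Sigma$); $d\Sigma(\{\lambda\})=\Sigma(\lambda+0)-\Sigma(\lambda-0)$. $T_\Sigma^*$ has domain $\{f=f_Q+\mathfrak c\,t(t^2+1)^{-1}: f_Q\in\operatorname{dom}(Q_\Sigma),\mathfrak c\in\mathbb C\}$, $T_\Sigma^*f=tf_Q-\mathfrak c(t^2+1)^{-1}$; $\Gamma_0^\Sigma f=\mathfrak c$, $\Gamma_1^{\Sigma,C}f=\mathfrak cC+\int f_Q\,d\Sigma$. $\widehat A\{\Sigma_+,C_+,\Sigma_-,C_-\}$ is the restriction of $T_{\Sigma_+}^*\oplus T_{\Sigma_-}^*$ in $L^2(\mathbb R,d\Sigma_+)\oplus L^2(\mathbb R,d\Sigma_-)$ to $\{f_++f_-: \Gamma_0^{\Sigma_+}f_+=\Gamma_0^{\Sigma_-}f_-,\ \Gamma_1^{\Sigma_+,C_+}f_+=\Gamma_1^{\Sigma_-,C_-}f_-\}$.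 *)

theory Defs
  imports "HOL-Analysis.Analysis"
begin

text \<open>d\<Sigma> is the Lebesgue--Stieltjes measure of the nondecreasing function \<Sigma>,
  i.e. the measure with d\<Sigma>((a,b]) = \<Sigma>(b+0) - \<Sigma>(a+0).\<close>
definition LS_measure :: "(real \<Rightarrow> real) \<Rightarrow> real measure" where
  "LS_measure S = interval_measure (\<lambda>x. Lim (at_right x) S)"

definition L2 :: "real measure \<Rightarrow> (real \<Rightarrow> complex) \<Rightarrow> bool" where
  "L2 M f \<longleftrightarrow> f \<in> borel_measurable M \<and> integrable M (\<lambda>t. (cmod (f t))^2)"

definition nullf :: "real measure \<Rightarrow> (real \<Rightarrow> complex) \<Rightarrow> bool" where
  "nullf M f \<longleftrightarrow> (AE t in M. f t = 0)"

definition domQ :: "real measure \<Rightarrow> (real \<Rightarrow> complex) \<Rightarrow> bool" where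
  "domQ M f \<longleftrightarrow> L2 M f \<and> L2 M (\<lambda>t. complex_of_real t * f t)"

definition sigma_p_Q :: "real measure \<Rightarrow> complex set" where
  "sigma_p_Q M = {z. \<exists>f. domQ M f \<and> \<not> nullf M f \<and> nullf M (\<lambda>t. (complex_of_real t - z) * f t)}"

definition ran_Q_minus :: "real measure \<Rightarrow> complex \<Rightarrow> (real \<Rightarrow> complex) set" where
  "ran_Q_minus M z = {g. L2 M g \<and> (\<exists>f. domQ M f \<and> (AE t in M. g t = (complex_of_real t - z) * f t))}"

definition dense_L2 :: "real measure \<Rightarrow> (real \<Rightarrow> complex) set \<Rightarrow> bool" where
  "dense_L2 M S \<longleftrightarrow> (\<forall>g. L2 M g \<longrightarrow> (\<forall>\<epsilon>>0. \<exists>h\<in>S.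
       (\<integral>\<^sup>+ t. ennreal ((cmod (g t - h t))^2) \<partial>M) < ennreal \<epsilon>))"

definition sigma_c_Q :: "real measure \<Rightarrow> complex set" where
  "sigma_c_Q M = {z. z \<notin> sigma_p_Q M \<and> dense_L2 M (ran_Q_minus M z)
       \<and> (\<exists>g. L2 M g \<and> g \<notin> ran_Q_minus M z)}"

definition A0 :: "real measure \<Rightarrow> complex set" where
  "A0 M = {z \<in> sigma_c_Q M. (\<integral>\<^sup>+ t. ennreal (1 / (cmod (complex_of_real t - z))^2) \<partial>M) = \<infinity>}"

definition Ar :: "real measure \<Rightarrow> complex set" where
  "Ar M = {z. z \<notin> sigma_p_Q M \<and> (\<integral>\<^sup>+ t. ennreal (1 / (cmod (complex_of_real t - z))^2) \<partial>M) < \<infinity>}"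

definition Ap :: "real measure \<Rightarrow> complex set" where
  "Ap M = sigma_p_Q M"

text \<open>f = f_Q + c t/(t^2+1) with f_Q in dom(Q_\<Sigma>); T^* f = t f_Q - c/(t^2+1).\<close>
definition Tstar_decomp :: "real measure \<Rightarrow> (real \<Rightarrow> complex) \<Rightarrow> (real \<Rightarrow> complex) \<Rightarrow> complex \<Rightarrow> bool" where
  "Tstar_decomp M f fQ c \<longleftrightarrow> L2 M f \<and> domQ M fQ \<and>
     (AE t in M. f t = fQ t + c * complex_of_real (t / (t^2 + 1)))"

definition Tstar_image :: "real measure \<Rightarrow> (real \<Rightarrow> complex) \<Rightarrow> (real \<Rightarrow> complex) \<Rightarrow> complex \<Rightarrow> bool" where
  "Tstar_image M g fQ c \<longleftrightarrow> L2 M g \<and>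
     (AE t in M. g t = complex_of_real t * fQ t - c * complex_of_real (1 / (t^2 + 1)))"

type_synonym vec = "(real \<Rightarrow> complex) \<times> (real \<Rightarrow> complex)"

text \<open>Graph of \<widehat>A{\<Sigma>+,C+,\<Sigma>-,C-} in L^2(d\<Sigma>+) \<oplus> L^2(d\<Sigma>-); Gamma_0 f = c,
  Gamma_1^{\<Sigma>,C} f = c C + \<integral> f_Q d\<Sigma>.\<close>
definition Ahat :: "(real \<Rightarrow> real) \<Rightarrow> real \<Rightarrow> (real \<Rightarrow> real) \<Rightarrow> real \<Rightarrow> (vec \<times> vec) set" where
  "Ahat Sp Cp Sm Cm = {((fp, fm), (gp, gm)).
     \<exists>fQp cp fQm cm.
        Tstar_decomp (LS_measure Sp) fp fQp cp \<and> Tstar_image (LS_measure Sp) gp fQp cp \<and>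
        Tstar_decomp (LS_measure Sm) fm fQm cm \<and> Tstar_image (LS_measure Sm) gm fQm cm \<and>
        cp = cm \<and>
        cp * complex_of_real Cp + integral\<^sup>L (LS_measure Sp) fQp
          = cm * complex_of_real Cm + integral\<^sup>L (LS_measure Sm) fQm}"

definition vnull :: "real measure \<Rightarrow> real measure \<Rightarrow> vec \<Rightarrow> bool" where
  "vnull Mp Mm v \<longleftrightarrow> nullf Mp (fst v) \<and> nullf Mm (snd v)"

text \<open>rootsp A z n = ker (A - z)^n (as a set of representatives).\<close>
fun rootsp :: "real measure \<Rightarrow> real measure \<Rightarrow> (vec \<times> vec) set \<Rightarrow> complex \<Rightarrow> nat \<Rightarrow> vec set" where
  "rootsp Mp Mm A z 0 = {v. vnull Mp Mm v}"
| "rootsp Mp Mm A z (Suc n) = {v. \<exists>w. (v, w) \<in> A \<and>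
      ((\<lambda>t. fst w t - z * fst v t), (\<lambda>t. snd w t - z * snd v t)) \<in> rootsp Mp Mm A z n}"

definition indep_mod :: "real measure \<Rightarrow> real measure \<Rightarrow> vec set \<Rightarrow> bool" where
  "indep_mod Mp Mm F \<longleftrightarrow> (\<forall>a :: vec \<Rightarrow> complex.
      vnull Mp Mm ((\<lambda>t. \<Sum>v\<in>F. a v * fst v t), (\<lambda>t. \<Sum>v\<in>F. a v * snd v t))
      \<longrightarrow> (\<forall>v\<in>F. a v = 0))"

definition dim_mod :: "real measure \<Rightarrow> real measure \<Rightarrow> vec set \<Rightarrow> enat" where
  "dim_mod Mp Mm S = Sup {enat (card F) | F. finite F \<and> F \<subseteq> S \<and> indep_mod Mp Mm F}"

definition op_sigma_p :: "real measure \<Rightarrow> real measure \<Rightarrow> (vec \<times> vec) set \<Rightarrow> complex set" where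
  "op_sigma_p Mp Mm A = {z. \<exists>v \<in> rootsp Mp Mm A z 1. \<not> vnull Mp Mm v}"

definition geom_mult :: "real measure \<Rightarrow> real measure \<Rightarrow> (vec \<times> vec) set \<Rightarrow> complex \<Rightarrow> enat" where
  "geom_mult Mp Mm A z = dim_mod Mp Mm (rootsp Mp Mm A z 1)"

definition alg_mult :: "real measure \<Rightarrow> real measure \<Rightarrow> (vec \<times> vec) set \<Rightarrow> complex \<Rightarrow> enat" where
  "alg_mult Mp Mm A z = dim_mod Mp Mm (\<Union>n. rootsp Mp Mm A z n)"

definition simple_eig :: "real measure \<Rightarrow> real measure \<Rightarrow> (vec \<times> vec) set \<Rightarrow> complex \<Rightarrow> bool" where
  "simple_eig Mp Mm A z \<longleftrightarrow> z \<in> op_sigma_p Mp Mm A \<and> alg_mult Mp Mm A z = 1"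

definition is_greatest :: "enat set \<Rightarrow> enat \<Rightarrow> bool" where
  "is_greatest S k \<longleftrightarrow> k \<in> S \<and> (\<forall>k'\<in>S. k' \<le> k)"

definition admissible :: "(real \<Rightarrow> real) \<Rightarrow> real \<Rightarrow> bool" where
  "admissible S C \<longleftrightarrow> mono S
     \<and> (\<integral>\<^sup>+ t. ennreal (1 / (1 + t^2)) \<partial>LS_measure S) < \<infinity>
     \<and> emeasure (LS_measure S) UNIV = \<infinity>
     \<and> (\<forall>t. S t = (Lim (at_left t) S + Lim (at_right t) S) / 2)
     \<and> S 0 = 0
     \<and> (\<integral>\<^sup>+ t. ennreal (1 / (1 + \<bar>t\<bar>)) \<partial>LS_measure S) < \<infinity>
     \<and> C = (\<integral> t. t / (1 + t^2) \<partial>LS_measure S)"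

end

theory Submission
  imports Defs "HOL-Library.Function_Algebras"
begin

text \<open>
  Since \<open>\<integral>(1 + |t|)\<^sup>-\<^sup>1 d\<Sigma> < \<infinity>\<close>, every \<open>f\<close> with \<open>f, t f - c \<in> L\<^sup>2\<close> is
  integrable, and \<open>\<widehat>A\<close> becomes the operator \<open>f \<mapsto> t f - c\<close> acting on pairs \<open>(f\<^sub>+, f\<^sub>-)\<close> with a
  common constant \<open>c\<close> and equal integrals \<open>\<integral>f\<^sub>+ d\<Sigma>\<^sub>+ = \<integral>f\<^sub>- d\<Sigma>\<^sub>-\<close>. Solving \<open>(\<widehat>A - z) v = u\<close>
  pointwise gives \<open>v = (u + c)/(t - z)\<close> off \<open>z\<close>, so away from atoms the root vectors are
  spanned by the powers \<open>(t - z)\<^sup>-\<^sup>j\<close>; at a common atom \<open>z\<close> they are built from the point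
  masses at \<open>z\<close> together with these powers. In each case the root space is spanned by an
  explicit Jordan chain, and its length is the largest \<open>k\<close> for which the powers stay in
  \<open>L\<^sup>2\<close> and the integral constraint can be satisfied at every step.
\<close>

lemma L2_dominated:
  assumes "L2 M f" "g \<in> borel_measurable M" "AE t in M. cmod (g t) \<le> K * cmod (f t)"
  shows "L2 M g"
proof -
  have i: "integrable M (\<lambda>t. K^2 * (cmod (f t))^2)" using assms(1) by (simp add: L2_def)
  have ae: "AE t in M. norm ((cmod (g t))^2) \<le> norm (K^2 * (cmod (f t))^2)"
    using assms(3)
  proof eventually_elim
    case (elim t)
    have "(cmod (g t))^2 \<le> (K * cmod (f t))^2"
      by (rule power_mono[OF elim norm_ge_zero])
    then show ?case by (simp add: power_mult_distrib)
  qed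
  have m: "(\<lambda>t. (cmod (g t))^2) \<in> borel_measurable M" using assms(2) by measurable
  show ?thesis using assms(2) Bochner_Integration.integrable_bound[OF i m ae] unfolding L2_def by simp
qed

lemma L2_add: assumes "L2 M f" "L2 M g" shows "L2 M (\<lambda>t. f t + g t)"
proof -
  have i: "integrable M (\<lambda>t. 2 * (cmod (f t))^2 + 2 * (cmod (g t))^2)"
    using assms by (simp add: L2_def)
  have bnd: "norm ((cmod (f t + g t))^2) \<le> norm (2 * (cmod (f t))^2 + 2 * (cmod (g t))^2)" for t
  proof -
    have "(cmod (f t + g t))^2 \<le> (cmod (f t) + cmod (g t))^2"
      by (rule power_mono[OF norm_triangle_ineq]) simp
    also have "\<dots> \<le> 2 * (cmod (f t))^2 + 2 * (cmod (g t))^2"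
      using zero_le_power2[of "cmod (f t) - cmod (g t)"] by (simp add: power2_eq_square algebra_simps)
    finally show ?thesis by simp
  qed
  have [measurable]: "f \<in> borel_measurable M" "g \<in> borel_measurable M" using assms unfolding L2_def by auto
  have m: "(\<lambda>t. (cmod (f t + g t))^2) \<in> borel_measurable M" by measurable
  show ?thesis unfolding L2_def
    using Bochner_Integration.integrable_bound[OF i m AE_I2[OF bnd]] by simp
qed

lemma L2_cmult: assumes "L2 M f" shows "L2 M (\<lambda>t. c * f t)"
proof -
  have [measurable]: "f \<in> borel_measurable M" using assms unfolding L2_def by auto
  have "(\<lambda>t. c * f t) \<in> borel_measurable M" by measurable
  then show ?thesis using assms unfolding L2_def by (simp add: norm_mult power_mult_distrib)
qed

lemma L2_uminus: assumes "L2 M f" shows "L2 M (\<lambda>t. - f t)"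
  using L2_cmult[OF assms, of "-1"] by simp

lemma L2_diff: assumes "L2 M f" "L2 M g" shows "L2 M (\<lambda>t. f t - g t)"
  using L2_add[OF assms(1) L2_uminus[OF assms(2)]] by simp

lemma L2_zero: "L2 M (\<lambda>t. 0)" by (simp add: L2_def)

lemma L2_cong: assumes "L2 M f" "g \<in> borel_measurable M" "AE t in M. g t = f t" shows "L2 M g"
  by (rule L2_dominated[OF assms(1,2), of 1]) (use assms(3) in auto)

definition delta :: "real \<Rightarrow> real \<Rightarrow> complex" where
  "delta r = (\<lambda>t. complex_of_real (indicator {r} t))"

lemma delta_same[simp]: "delta r r = 1" by (simp add: delta_def)

lemma delta_other[simp]: "t \<noteq> r \<Longrightarrow> delta r t = 0" by (simp add: delta_def)

locale spectral_measure =
  fixes M :: "real measure"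
  assumes sets_M: "sets M = sets borel"
    and finite_weight: "(\<integral>\<^sup>+ t. ennreal (1 / (1 + t^2)) \<partial>M) < \<infinity>"
    and finite_abs_weight: "(\<integral>\<^sup>+ t. ennreal (1 / (1 + \<bar>t\<bar>)) \<partial>M) < \<infinity>"
    and infinite_total: "emeasure M UNIV = \<infinity>"
begin

declare sets_M[measurable_cong]

lemma space_M[simp]: "space M = UNIV"
  using sets_eq_imp_space_eq[OF sets_M] by simp

lemma borel_measurable_M_iff: "f \<in> borel_measurable M \<longleftrightarrow> f \<in> borel_measurable borel"
  by (simp only: measurable_cong_sets[OF sets_M refl])

lemma integrable_weight: "integrable M (\<lambda>t. 1 / (1 + t^2))"
  by (rule integrableI_nonneg) (use finite_weight in auto)

lemma integrable_abs_weight: "integrable M (\<lambda>t. 1 / (1 + \<bar>t\<bar>))"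
  by (rule integrableI_nonneg) (use finite_abs_weight in auto)

lemma L2_const_eq_0: assumes "L2 M (\<lambda>t. c)" shows "c = 0"
proof (rule ccontr)
  assume "c \<noteq> 0"
  have "integrable M (\<lambda>t. (cmod c)^2)" using assms by (simp add: L2_def)
  then have "(\<integral>\<^sup>+ t. ennreal (norm ((cmod c)^2)) \<partial>M) < \<infinity>"
    by (simp only: integrable_iff_bounded)
  moreover have "(\<integral>\<^sup>+ t. ennreal (norm ((cmod c)^2)) \<partial>M) = ennreal (norm ((cmod c)^2)) * emeasure M (space M)"
    by (rule nn_integral_const)
  moreover have "ennreal (norm ((cmod c)^2)) \<noteq> 0" using \<open>c \<noteq> 0\<close> by simp
  ultimately show False using infinite_total by simp
qed

lemma L2_of_real_bounded: assumes "f \<in> borel_measurable M" "\<And>t. (f t)^2 \<le> 1 / (1 + t^2)"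
  shows "L2 M (\<lambda>t. complex_of_real (f t))"
proof -
  have [measurable]: "f \<in> borel_measurable M" using assms(1) by simp
  have m: "(\<lambda>t. (cmod (complex_of_real (f t)))^2) \<in> borel_measurable M" by measurable
  have ae: "AE t in M. norm ((cmod (complex_of_real (f t)))^2) \<le> norm (1 / (1 + t^2))"
    by (rule AE_I2) (use assms(2) in simp)
  have "integrable M (\<lambda>t. (cmod (complex_of_real (f t)))^2)"
    by (rule Bochner_Integration.integrable_bound[OF integrable_weight m ae])
  moreover have "(\<lambda>t. complex_of_real (f t)) \<in> borel_measurable M" by measurable
  ultimately show ?thesis by (simp add: L2_def)
qed

lemma L2_t_weight: "L2 M (\<lambda>t. complex_of_real (t / (t^2+1)))"
proof (rule L2_of_real_bounded)
  show "(\<lambda>t. t / (t^2+1)) \<in> borel_measurable M" by measurable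
  fix t :: real
  have pos: "t^2 + 1 > 0" by (simp add: add_nonneg_pos)
  have "(t / (t^2+1))^2 = t^2 / (t^2+1)^2" by (simp add: power_divide)
  also have "\<dots> \<le> (t^2+1) / (t^2+1)^2" by (rule divide_right_mono) auto
  also have "\<dots> = 1 / (1 + t^2)" using pos by (simp add: power2_eq_square add.commute)
  finally show "(t / (t^2+1))^2 \<le> 1 / (1 + t^2)" .
qed

lemma L2_weight: "L2 M (\<lambda>t. complex_of_real (1 / (t^2+1)))"
proof (rule L2_of_real_bounded)
  show "(\<lambda>t. 1 / (t^2+1)) \<in> borel_measurable M" by measurable
  fix t :: real
  have pos: "t^2 + 1 \<ge> 1" by (smt (verit) zero_le_power2)
  have "(1 / (t^2+1))^2 = 1 / (t^2+1) * (1 / (t^2+1))" by (simp add: power2_eq_square)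
  also have "\<dots> \<le> 1 / (t^2+1) * 1"
  proof (rule mult_left_mono)
    have p: "0 < t^2+1" using pos by linarith
    show "1 / (t^2+1) \<le> 1" using p pos divide_le_eq_1[of 1 "t^2+1"] by blast
    show "0 \<le> 1 / (t^2+1)" using pos by simp
  qed
  finally show "(1 / (t^2+1))^2 \<le> 1 / (1 + t^2)" by (simp add: add.commute)
qed

lemma integrable_t_weight: "integrable M (\<lambda>t. t / (1 + t^2))"
proof -
  have m: "(\<lambda>t. t / (1 + t^2)) \<in> borel_measurable M" by measurable
  have i: "integrable M (\<lambda>t. 2 * (1 / (1 + \<bar>t\<bar>)))" by (rule integrable_mult_right[OF integrable_abs_weight])
  have "norm (t / (1 + t^2)) \<le> norm (2 * (1 / (1 + \<bar>t\<bar>)))" for t :: real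
  proof -
    have pos: "1 + t^2 > 0" by (smt (verit) zero_le_power2)
    have "0 \<le> (\<bar>t\<bar> - 1)^2" by simp
    then have "\<bar>t\<bar> * (1 + \<bar>t\<bar>) \<le> 2 * (1 + \<bar>t\<bar>^2)"
      by (simp add: power2_eq_square algebra_simps)
    then have "\<bar>t\<bar> * (1 + \<bar>t\<bar>) \<le> 2 * (1 + t^2)" by simp
    then show ?thesis using pos by (simp add: abs_div divide_le_eq field_simps)
  qed
  then show ?thesis by (intro Bochner_Integration.integrable_bound[OF i m] AE_I2)
qed

text \<open>Pointwise \<open>(1 + |t|)|f| \<le> |f| + |t f - c| + |c|\<close>; dividing by \<open>1 + |t|\<close> and
  using \<open>ab \<le> (a\<^sup>2 + b\<^sup>2)/2\<close> dominates \<open>|f|\<close> by an integrable function.\<close>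
lemma L2_graph_integrable:
  assumes f: "L2 M f" and g: "L2 M (\<lambda>t. complex_of_real t * f t - c)"
  shows "integrable M f"
proof -
  define h where "h t = (cmod (f t))^2 / 2 + (cmod (complex_of_real t * f t - c))^2 / 2
      + 1 / (1 + t^2) + cmod c * (1 / (1 + \<bar>t\<bar>))" for t
  have i: "integrable M h" unfolding h_def using f g integrable_weight integrable_abs_weight
    by (intro Bochner_Integration.integrable_add integrable_divide integrable_mult_right)
       (auto simp: L2_def)
  have m: "f \<in> borel_measurable M" using f by (simp add: L2_def)
  have "norm (f t) \<le> norm (h t)" for t
  proof -
    define a where "a = cmod (f t)"
    define b where "b = cmod (complex_of_real t * f t - c)"
    define u where "u = 1 / (1 + \<bar>t\<bar>)"
    have "\<bar>t\<bar> * a \<le> b + cmod c" unfolding a_def b_def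
      using norm_triangle_ineq[of "complex_of_real t * f t - c" c] by (simp add: norm_mult)
    then have "(1 + \<bar>t\<bar>) * a \<le> a + b + cmod c" by (simp add: algebra_simps)
    then have 1: "a \<le> (a + b + cmod c) * u" unfolding u_def by (simp add: field_simps)
    have "1 + t^2 \<le> (1 + \<bar>t\<bar>)^2" by (simp add: power2_eq_square algebra_simps)
    then have "1 / (1 + \<bar>t\<bar>)^2 \<le> 1 / (1 + t^2)"
      by (intro divide_left_mono) (auto simp: add_pos_nonneg)
    then have "u^2 \<le> 1 / (1 + t^2)" unfolding u_def by (simp add: power_divide)
    moreover have "a * u \<le> a^2/2 + u^2/2" "b * u \<le> b^2/2 + u^2/2"
      using zero_le_power2[of "a - u"] zero_le_power2[of "b - u"]
      by (simp_all add: power2_eq_square algebra_simps)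
    ultimately have "a \<le> a^2/2 + b^2/2 + 1/(1+t^2) + cmod c * u"
      using 1 by (simp add: algebra_simps)
    then show ?thesis unfolding h_def a_def b_def u_def by simp
  qed
  then show ?thesis by (intro Bochner_Integration.integrable_bound[OF i m] AE_I2)
qed

lemma emeasure_singleton_finite: "emeasure M {r} < \<infinity>"
proof -
  have "(\<integral>\<^sup>+ t. ennreal (1 / (1 + r^2)) * indicator {r} t \<partial>M) \<le> (\<integral>\<^sup>+ t. ennreal (1 / (1 + t^2)) \<partial>M)"
    by (intro nn_integral_mono) (auto split: split_indicator)
  moreover have "(\<integral>\<^sup>+ t. ennreal (1 / (1 + r^2)) * indicator {r} t \<partial>M) = ennreal (1 / (1 + r^2)) * emeasure M {r}"
    by (rule nn_integral_cmult_indicator) (simp add: sets_M)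
  ultimately have "ennreal (1 / (1 + r^2)) * emeasure M {r} < \<infinity>" using finite_weight by simp
  moreover have "1 / (1 + r^2) > 0" by (simp add: add_pos_nonneg)
  ultimately have "emeasure M {r} = 0 \<or> emeasure M {r} < top" by (simp add: ennreal_mult_less_top)
  then show ?thesis by (auto simp: ennreal_zero_less_top)
qed

lemma AE_at_atom: assumes "emeasure M {r} \<noteq> 0" "AE t in M. P t" shows "P r"
proof (rule ccontr)
  assume "\<not> P r"
  from assms(2) obtain N where N: "{x \<in> space M. \<not> P x} \<subseteq> N" "emeasure M N = 0" "N \<in> sets M"
    by (rule AE_E)
  then have "emeasure M {r} \<le> emeasure M N" using \<open>\<not> P r\<close> by (intro emeasure_mono) auto
  with N(2) assms(1) show False by simp
qed

lemma delta_measurable[measurable]: "delta r \<in> borel_measurable M"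
  unfolding delta_def by (simp add: sets_M)

lemma integrable_delta: "integrable M (delta r)"
proof -
  have "integrable M (indicator {r} :: real \<Rightarrow> real)"
    using emeasure_singleton_finite[of r] by (simp add: sets_M less_top)
  then show ?thesis unfolding delta_def by simp
qed

lemma integral_delta: "integral\<^sup>L M (delta r) = complex_of_real (measure M {r})"
  unfolding delta_def by (simp add: sets_M)

lemma L2_delta: "L2 M (delta r)"
proof -
  have "integrable M (indicator {r} :: real \<Rightarrow> real)"
    using emeasure_singleton_finite[of r] by (simp add: sets_M less_top)
  moreover have "(\<lambda>t. (cmod (delta r t))^2) = (indicator {r} :: real \<Rightarrow> real)"
    by (auto simp: delta_def fun_eq_iff split: split_indicator)
  ultimately show ?thesis by (simp add: L2_def)
qed

end

definition Tstar_graph :: "real measure \<Rightarrow> (real\<Rightarrow>complex) \<Rightarrow> (real\<Rightarrow>complex) \<Rightarrow> complex \<Rightarrow> bool" where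
  "Tstar_graph M f g c \<longleftrightarrow> L2 M f \<and> L2 M g \<and> (AE t in M. g t = complex_of_real t * f t - c)"

lemma Tstar_identity: "complex_of_real t * (a + c * complex_of_real (t / (t^2+1))) - c
   = complex_of_real t * a - c * complex_of_real (1/(t^2+1))"
proof -
  have pos: "t^2 + 1 \<noteq> 0" by (smt (verit) zero_le_power2)
  have "t * (t / (t^2+1)) - 1 = - (1/(t^2+1))" using pos by (simp add: field_simps power2_eq_square)
  then have "complex_of_real (t * (t / (t^2+1)) - 1) = complex_of_real (- (1/(t^2+1)))" by simp
  then have "complex_of_real t * complex_of_real (t / (t^2+1)) - 1 = - complex_of_real (1/(t^2+1))"
    by simp
  then have e: "complex_of_real t * complex_of_real (t / (t^2+1)) = 1 - complex_of_real (1/(t^2+1))"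
    by (simp add: algebra_simps)
  have "complex_of_real t * (a + c * complex_of_real (t / (t^2+1))) - c
     = complex_of_real t * a + c * (complex_of_real t * complex_of_real (t / (t^2+1))) - c"
    by (simp add: algebra_simps)
  also have "\<dots> = complex_of_real t * a - c * complex_of_real (1/(t^2+1))"
    unfolding e by (simp add: algebra_simps)
  finally show ?thesis .
qed

context spectral_measure begin

lemma Tstar_graph_of_decomp:
  assumes d: "Tstar_decomp M f fQ c" and i: "Tstar_image M g fQ c"
  shows "Tstar_graph M f g c \<and> c * complex_of_real (\<integral> t. t / (1 + t^2) \<partial>M) + integral\<^sup>L M fQ = integral\<^sup>L M f"
proof -
  from d have f: "L2 M f" and fQ: "L2 M fQ" and tfQ: "L2 M (\<lambda>t. complex_of_real t * fQ t)"
    and ae1: "AE t in M. f t = fQ t + c * complex_of_real (t / (t^2 + 1))"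
    by (auto simp: Tstar_decomp_def domQ_def)
  from i have g: "L2 M g" and ae2: "AE t in M. g t = complex_of_real t * fQ t - c * complex_of_real (1 / (t^2 + 1))"
    by (auto simp: Tstar_image_def)
  have ae: "AE t in M. g t = complex_of_real t * f t - c"
    using ae1 ae2 by eventually_elim (simp only: Tstar_identity)
  have intQ: "integrable M fQ" using L2_graph_integrable[OF fQ, of 0] tfQ by simp
  have ecomm: "(t::real)^2 + 1 = 1 + t^2" for t by simp
  have int_weight: "integrable M (\<lambda>t. complex_of_real (t / (t^2 + 1)))"
    using integrable_of_real[OF integrable_t_weight] by (simp only: ecomm)
  have [measurable]: "f \<in> borel_measurable M" "fQ \<in> borel_measurable M" using f fQ by (auto simp: L2_def)
  have "integral\<^sup>L M f = (\<integral> t. fQ t + c * complex_of_real (t / (t^2 + 1)) \<partial>M)"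
    by (rule integral_cong_AE) (use ae1 in auto)
  also have "\<dots> = integral\<^sup>L M fQ + (\<integral> t. c * complex_of_real (t / (t^2 + 1)) \<partial>M)"
    by (rule Bochner_Integration.integral_add[OF intQ integrable_mult_right[OF int_weight]])
  also have "(\<integral> t. c * complex_of_real (t / (t^2 + 1)) \<partial>M) = c * (\<integral> t. complex_of_real (t / (t^2 + 1)) \<partial>M)"
    by (rule integral_mult_right_zero)
  also have "(\<integral> t. complex_of_real (t / (t^2 + 1)) \<partial>M) = complex_of_real (\<integral> t. t / (1 + t^2) \<partial>M)"
    by (simp only: ecomm integral_complex_of_real)
  finally show ?thesis using f g ae by (simp add: Tstar_graph_def)
qed

lemma Tstar_decomp_of_graph:
  assumes r: "Tstar_graph M f g c"
  shows "Tstar_decomp M f (\<lambda>t. f t - c * complex_of_real (t / (t^2 + 1))) c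
       \<and> Tstar_image M g (\<lambda>t. f t - c * complex_of_real (t / (t^2 + 1))) c"
proof -
  from r have f: "L2 M f" and g: "L2 M g" and ae: "AE t in M. g t = complex_of_real t * f t - c"
    by (auto simp: Tstar_graph_def)
  have [measurable]: "f \<in> borel_measurable M" "g \<in> borel_measurable M" using f g by (auto simp: L2_def)
  have fQ: "L2 M (\<lambda>t. f t - c * complex_of_real (t / (t^2 + 1)))"
    by (intro L2_diff f L2_cmult L2_t_weight)
  have ae': "AE t in M. complex_of_real t * (f t - c * complex_of_real (t / (t^2 + 1)))
      = g t + c * complex_of_real (1 / (t^2 + 1))"
    using ae
  proof eventually_elim
    case (elim t)
    show ?case
      using elim Tstar_identity[of t "f t - c * complex_of_real (t / (t^2 + 1))" c]
      by (simp add: algebra_simps)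
  qed
  have tfQ: "L2 M (\<lambda>t. complex_of_real t * (f t - c * complex_of_real (t / (t^2 + 1))))"
    by (rule L2_cong[OF L2_add[OF g L2_cmult[OF L2_weight]] _ ae']) measurable
  have ae2: "AE t in M. g t = complex_of_real t * (f t - c * complex_of_real (t / (t^2 + 1)))
      - c * complex_of_real (1 / (t^2 + 1))"
    using ae' by eventually_elim simp
  show ?thesis using f fQ tfQ g ae2
    by (auto simp: Tstar_decomp_def Tstar_image_def domQ_def)
qed

end

text \<open>As \<open>C = \<integral>t/(1 + t\<^sup>2) d\<Sigma>\<close>, the condition \<open>\<Gamma>\<^sub>1 f\<^sub>+ = \<Gamma>\<^sub>1 f\<^sub>-\<close> reduces to
  \<open>\<integral>f\<^sub>+ d\<Sigma>\<^sub>+ = \<integral>f\<^sub>- d\<Sigma>\<^sub>-\<close>, and the representation \<open>f = f\<^sub>Q + c t/(t\<^sup>2 + 1)\<close> can be dropped.\<close>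
lemma Ahat_iff:
  assumes sp: "spectral_measure (LS_measure Sp)" and sm: "spectral_measure (LS_measure Sm)"
    and cp: "Cp = (\<integral> t. t / (1 + t^2) \<partial>LS_measure Sp)"
    and cm: "Cm = (\<integral> t. t / (1 + t^2) \<partial>LS_measure Sm)"
  shows "((fp, fm), (gp, gm)) \<in> Ahat Sp Cp Sm Cm \<longleftrightarrow>
    (\<exists>c. Tstar_graph (LS_measure Sp) fp gp c \<and> Tstar_graph (LS_measure Sm) fm gm c
       \<and> integral\<^sup>L (LS_measure Sp) fp = integral\<^sup>L (LS_measure Sm) fm)"
proof
  assume "((fp, fm), (gp, gm)) \<in> Ahat Sp Cp Sm Cm"
  then obtain fQp cp' fQm cm' where
    h: "Tstar_decomp (LS_measure Sp) fp fQp cp'" "Tstar_image (LS_measure Sp) gp fQp cp'"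
      "Tstar_decomp (LS_measure Sm) fm fQm cm'" "Tstar_image (LS_measure Sm) gm fQm cm'"
      "cp' = cm'" "cp' * complex_of_real Cp + integral\<^sup>L (LS_measure Sp) fQp
          = cm' * complex_of_real Cm + integral\<^sup>L (LS_measure Sm) fQm"
    unfolding Ahat_def by blast
  from spectral_measure.Tstar_graph_of_decomp[OF sp h(1,2)] spectral_measure.Tstar_graph_of_decomp[OF sm h(3,4)] h(5,6) cp cm
  show "\<exists>c. Tstar_graph (LS_measure Sp) fp gp c \<and> Tstar_graph (LS_measure Sm) fm gm c
       \<and> integral\<^sup>L (LS_measure Sp) fp = integral\<^sup>L (LS_measure Sm) fm" by metis
next
  assume "\<exists>c. Tstar_graph (LS_measure Sp) fp gp c \<and> Tstar_graph (LS_measure Sm) fm gm c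
       \<and> integral\<^sup>L (LS_measure Sp) fp = integral\<^sup>L (LS_measure Sm) fm"
  then obtain c where r: "Tstar_graph (LS_measure Sp) fp gp c" "Tstar_graph (LS_measure Sm) fm gm c"
    "integral\<^sup>L (LS_measure Sp) fp = integral\<^sup>L (LS_measure Sm) fm" by blast
  define fQp where "fQp = (\<lambda>t. fp t - c * complex_of_real (t / (t^2 + 1)))"
  define fQm where "fQm = (\<lambda>t. fm t - c * complex_of_real (t / (t^2 + 1)))"
  note bp = spectral_measure.Tstar_decomp_of_graph[OF sp r(1), folded fQp_def]
  note bm = spectral_measure.Tstar_decomp_of_graph[OF sm r(2), folded fQm_def]
  note fp = spectral_measure.Tstar_graph_of_decomp[OF sp conjunct1[OF bp] conjunct2[OF bp]]
  note fm = spectral_measure.Tstar_graph_of_decomp[OF sm conjunct1[OF bm] conjunct2[OF bm]]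
  have "c * complex_of_real Cp + integral\<^sup>L (LS_measure Sp) fQp
          = c * complex_of_real Cm + integral\<^sup>L (LS_measure Sm) fQm"
    using fp fm r(3) cp cm by simp
  then show "((fp, fm), (gp, gm)) \<in> Ahat Sp Cp Sm Cm"
    unfolding Ahat_def using bp bm by blast
qed

text \<open>One component of \<open>(T\<^sup>* - z) f = g\<close>, where \<open>c = \<Gamma>\<^sub>0 f\<close>.\<close>
definition shift_eq :: "real measure \<Rightarrow> complex \<Rightarrow> (real\<Rightarrow>complex) \<Rightarrow> (real\<Rightarrow>complex) \<Rightarrow> complex \<Rightarrow> bool" where
  "shift_eq M z f g c \<longleftrightarrow> L2 M f \<and> L2 M (\<lambda>t. complex_of_real t * f t - c)
     \<and> (AE t in M. (complex_of_real t - z) * f t - c = g t)"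

lemma shift_eq_lincomb:
  assumes s1: "shift_eq M z f1 g1 c1" and s2: "shift_eq M z f2 g2 c2"
  shows "shift_eq M z (\<lambda>t. a * f1 t + b * f2 t) (\<lambda>t. a * g1 t + b * g2 t) (a * c1 + b * c2)"
proof -
  from s1 have f1: "L2 M f1" and tf1: "L2 M (\<lambda>t. complex_of_real t * f1 t - c1)"
    and ae1: "AE t in M. (complex_of_real t - z) * f1 t - c1 = g1 t" by (auto simp: shift_eq_def)
  from s2 have f2: "L2 M f2" and tf2: "L2 M (\<lambda>t. complex_of_real t * f2 t - c2)"
    and ae2: "AE t in M. (complex_of_real t - z) * f2 t - c2 = g2 t" by (auto simp: shift_eq_def)
  have "L2 M (\<lambda>t. a * f1 t + b * f2 t)" by (intro L2_add L2_cmult f1 f2)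
  moreover have "L2 M (\<lambda>t. complex_of_real t * (a * f1 t + b * f2 t) - (a * c1 + b * c2))"
  proof -
    have "L2 M (\<lambda>t. a * (complex_of_real t * f1 t - c1) + b * (complex_of_real t * f2 t - c2))"
      by (intro L2_add L2_cmult tf1 tf2)
    moreover have "(\<lambda>t. a * (complex_of_real t * f1 t - c1) + b * (complex_of_real t * f2 t - c2))
      = (\<lambda>t. complex_of_real t * (a * f1 t + b * f2 t) - (a * c1 + b * c2))"
      by (rule ext) (simp add: algebra_simps)
    ultimately show ?thesis by simp
  qed
  moreover have "AE t in M. (complex_of_real t - z) * (a * f1 t + b * f2 t) - (a * c1 + b * c2) = a * g1 t + b * g2 t"
    using ae1 ae2 by eventually_elim (simp add: algebra_simps)
  ultimately show ?thesis by (simp add: shift_eq_def)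
qed

lemma shift_eq_cong_rhs: "shift_eq M z f g c \<Longrightarrow> AE t in M. g t = g' t \<Longrightarrow> shift_eq M z f g' c"
  unfolding shift_eq_def by (auto elim: eventually_rev_mp)

lemma shift_eq_off_point: assumes "shift_eq M z f g c"
  shows "AE t in M. complex_of_real t \<noteq> z \<longrightarrow> f t = (g t + c) / (complex_of_real t - z)"
  using assms unfolding shift_eq_def
  by (auto elim!: eventually_mono simp: field_simps)

context spectral_measure begin

lemma shift_eq_cong:
  assumes "shift_eq M z f g c" "AE t in M. f t = f' t" "f' \<in> borel_measurable M"
  shows "shift_eq M z f' g c"
proof -
  have [measurable]: "f' \<in> borel_measurable M" by (fact assms(3))
  from assms(1) have f: "L2 M f" and tf: "L2 M (\<lambda>t. complex_of_real t * f t - c)"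
    and ae: "AE t in M. (complex_of_real t - z) * f t - c = g t" by (auto simp: shift_eq_def)
  have "L2 M f'" by (rule L2_cong[OF f assms(3)]) (use assms(2) in \<open>auto elim: eventually_mono\<close>)
  moreover have "L2 M (\<lambda>t. complex_of_real t * f' t - c)"
    by (rule L2_cong[OF tf]) (measurable, use assms(2) in \<open>auto elim: eventually_mono\<close>)
  moreover have "AE t in M. (complex_of_real t - z) * f' t - c = g t"
    using ae assms(2) by eventually_elim simp
  ultimately show ?thesis by (simp add: shift_eq_def)
qed

lemma shift_eq_integrable: "shift_eq M z f g c \<Longrightarrow> integrable M f"
  unfolding shift_eq_def using L2_graph_integrable by blast

lemma shift_eq_null:
  assumes "shift_eq M z f g c" "AE t in M. f t = 0"
  shows "c = 0 \<and> (AE t in M. g t = 0)"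
proof -
  from assms(1) have tf: "L2 M (\<lambda>t. complex_of_real t * f t - c)"
    and ae: "AE t in M. (complex_of_real t - z) * f t - c = g t" by (auto simp: shift_eq_def)
  have "L2 M (\<lambda>t. - c)"
    by (rule L2_cong[OF tf]) (simp, use assms(2) in \<open>auto elim: eventually_mono\<close>)
  then have c: "c = 0" using L2_const_eq_0 by fastforce
  have "AE t in M. g t = 0" using ae assms(2) by eventually_elim (simp add: c)
  with c show ?thesis by simp
qed

end

definition vdiff :: "vec \<Rightarrow> vec \<Rightarrow> vec" where
  "vdiff v w = ((\<lambda>t. fst v t - fst w t), (\<lambda>t. snd v t - snd w t))"

definition vsum :: "'i set \<Rightarrow> ('i \<Rightarrow> complex) \<Rightarrow> ('i \<Rightarrow> vec) \<Rightarrow> vec" where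
  "vsum I a e = ((\<lambda>t. \<Sum>i\<in>I. a i * fst (e i) t), (\<lambda>t. \<Sum>i\<in>I. a i * snd (e i) t))"

definition vzero :: vec where "vzero = ((\<lambda>t. 0), (\<lambda>t. 0))"

definition vmeasurable :: "vec \<Rightarrow> bool" where
  "vmeasurable v \<longleftrightarrow> fst v \<in> borel_measurable borel \<and> snd v \<in> borel_measurable borel"

definition vlin :: "complex \<Rightarrow> vec \<Rightarrow> complex \<Rightarrow> vec \<Rightarrow> vec" where
  "vlin a v b w = ((\<lambda>t. a * fst v t + b * fst w t), (\<lambda>t. a * snd v t + b * snd w t))"

lemma vsum_cong: "(\<And>i. i \<in> I \<Longrightarrow> a i = b i) \<Longrightarrow> vsum I a e = vsum I b e"
  by (simp add: vsum_def)

lemma vsum_cong_vec: "(\<And>i. i \<in> I \<Longrightarrow> e i = e' i) \<Longrightarrow> vsum I a e = vsum I a e'"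
  by (simp add: vsum_def)

lemma vsum_insert: "finite I \<Longrightarrow> i \<notin> I \<Longrightarrow> vsum (insert i I) a e = vlin 1 (vsum I a e) (a i) (e i)"
  by (simp add: vsum_def vlin_def add.commute)

lemma vsum_mono_neutral: "finite I \<Longrightarrow> J \<subseteq> I \<Longrightarrow> (\<And>i. i \<in> I - J \<Longrightarrow> a i = 0) \<Longrightarrow> vsum I a e = vsum J a e"
  unfolding vsum_def by (auto intro!: ext sum.mono_neutral_right)

lemma vsum_reindex: "inj_on h I \<Longrightarrow> vsum (h ` I) a e = vsum I (\<lambda>i. a (h i)) (\<lambda>i. e (h i))"
  unfolding vsum_def by (simp add: sum.reindex)

lemma vsum_shift: "vsum {Suc m..Suc n} a u = vsum {m..n} (\<lambda>i. a (Suc i)) (\<lambda>i. u (Suc i))"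
  unfolding vsum_def by (simp only: sum.shift_bounds_cl_Suc_ivl)

lemma vsum_vsum:
  assumes "finite F" "finite J"
  shows "vsum F a (\<lambda>f. vsum J (co f) e) = vsum J (\<lambda>j. \<Sum>f\<in>F. a f * co f j) e"
proof -
  have "(\<Sum>f\<in>F. a f * (\<Sum>j\<in>J. co f j * h j)) = (\<Sum>j\<in>J. (\<Sum>f\<in>F. a f * co f j) * h j)"
    for h :: "_ \<Rightarrow> complex"
    by (simp add: sum_distrib_left sum_distrib_right mult.assoc) (rule sum.swap)
  then show ?thesis by (simp add: vsum_def)
qed

lemma vsum_plus_minus:
  assumes "finite I" "i \<in> I" "j \<in> I" "i \<noteq> j"
  shows "vsum I (\<lambda>l. if l = i then 1 else if l = j then -1 else 0) e = vdiff (e i) (e j)"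
proof -
  have "(\<Sum>l\<in>I. (if l = i then 1 else if l = j then -1 else 0) * h l) = h i - h j"
    for h :: "_ \<Rightarrow> complex"
  proof -
    have "(\<Sum>l\<in>I. (if l = i then 1 else if l = j then -1 else 0) * h l)
        = (\<Sum>l\<in>I. (if l = i then h i else 0) + (if l = j then - h j else 0))"
      by (rule sum.cong) (auto simp: assms(4))
    also have "\<dots> = h i - h j" using assms(1-3) by (simp add: sum.distrib)
    finally show ?thesis .
  qed
  then show ?thesis by (simp add: vsum_def vdiff_def)
qed

definition seq_scale :: "complex \<Rightarrow> (nat \<Rightarrow> complex) \<Rightarrow> (nat \<Rightarrow> complex)" where
  "seq_scale c f = (\<lambda>i. c * f i)"

interpretation seq_space: Vector_Spaces.vector_space seq_scale
  by unfold_locales (auto simp: seq_scale_def fun_eq_iff algebra_simps)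

lemma sum_fun_apply: "(\<Sum>x\<in>t. (g x :: nat \<Rightarrow> complex)) j = (\<Sum>x\<in>t. g x j)"
  by (induction t rule: infinite_finite_induct) auto

lemma card_le_if_coeff_independent:
  fixes G :: "(nat \<Rightarrow> complex) set"
  assumes fin: "finite G" and supp: "\<And>x j. x \<in> G \<Longrightarrow> j \<notin> {1..k} \<Longrightarrow> x j = 0"
    and ind: "\<And>t u. finite t \<Longrightarrow> t \<subseteq> G \<Longrightarrow> (\<And>j. (\<Sum>x\<in>t. u x * x j) = 0) \<Longrightarrow> (\<forall>x\<in>t. u x = 0)"
  shows "card G \<le> k"
proof -
  define d where "d j = (\<lambda>i. if i = j then (1::complex) else 0)" for j :: nat
  define U where "U = d ` {1..k}"
  have "inj_on d {1..k}" by (auto simp: inj_on_def d_def fun_eq_iff)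
  then have cU: "card U = k" unfolding U_def by (simp add: card_image)
  have "seq_space.independent G"
  proof
    assume "seq_space.dependent G"
    then obtain t u where t: "finite t" "t \<subseteq> G" "(\<Sum>v\<in>t. seq_scale (u v) v) = 0" "\<exists>v\<in>t. u v \<noteq> 0"
      unfolding seq_space.dependent_explicit by blast
    have "(\<Sum>x\<in>t. u x * x j) = 0" for j
      using arg_cong[OF t(3), of "\<lambda>f. f j"] by (simp add: sum_fun_apply seq_scale_def)
    with ind[OF t(1,2)] t(4) show False by blast
  qed
  moreover have "G \<subseteq> seq_space.span U"
  proof
    fix x assume x: "x \<in> G"
    have "x = (\<Sum>j\<in>{1..k}. seq_scale (x j) (d j))"
    proof (rule ext)
      fix i
      have "(\<Sum>j\<in>{1..k}. seq_scale (x j) (d j)) i = (\<Sum>j\<in>{1..k}. x j * d j i)"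
        by (simp only: sum_fun_apply seq_scale_def)
      also have "\<dots> = (\<Sum>j\<in>{1..k}. if j = i then x i else 0)"
        by (rule sum.cong) (auto simp: d_def)
      also have "\<dots> = (if i \<in> {1..k} then x i else 0)" by (rule sum.delta) simp
      also have "\<dots> = x i" using supp[OF x, of i] by auto
      finally show "x i = (\<Sum>j\<in>{1..k}. seq_scale (x j) (d j)) i" by simp
    qed
    also have "\<dots> \<in> seq_space.span U"
      by (intro seq_space.span_sum seq_space.span_scale seq_space.span_base) (auto simp: U_def)
    finally show "x \<in> seq_space.span U" .
  qed
  ultimately have "card G \<le> card U"
    using seq_space.independent_span_bound[of U G] by (auto simp: U_def)
  with cU show ?thesis by simp
qed

lemma dim_mod_eqI:
  assumes lower: "\<And>k. enat k \<le> K \<Longrightarrow> \<exists>F. finite F \<and> F \<subseteq> S \<and> indep_mod Mp Mm F \<and> card F = k"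
    and upper: "\<And>F. finite F \<Longrightarrow> F \<subseteq> S \<Longrightarrow> indep_mod Mp Mm F \<Longrightarrow> enat (card F) \<le> K"
  shows "dim_mod Mp Mm S = K"
  unfolding dim_mod_def
proof (rule Sup_eqI)
  show "y \<le> K" if "y \<in> {enat (card F) |F. finite F \<and> F \<subseteq> S \<and> indep_mod Mp Mm F}" for y
    using that upper by blast
  fix y assume ub: "\<And>x. x \<in> {enat (card F) |F. finite F \<and> F \<subseteq> S \<and> indep_mod Mp Mm F} \<Longrightarrow> x \<le> y"
  have ub': "enat k \<le> y" if "enat k \<le> K" for k
    using lower[OF that] ub by blast
  show "K \<le> y"
  proof (cases K)
    case (enat k)
    then show ?thesis using ub'[of k] by simp
  next
    case infinity
    show ?thesis
    proof (cases y)
      case (enat m)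
      then show ?thesis using ub'[of "Suc m"] infinity by simp
    qed simp
  qed
qed

locale measure_pair = P: spectral_measure Mp + N: spectral_measure Mm for Mp Mm
begin

abbreviation "vn \<equiv> vnull Mp Mm"
abbreviation "veq v w \<equiv> vn (vdiff v w)"

lemma veq_refl: "veq v v" by (simp add: vnull_def vdiff_def nullf_def)

lemma veq_sym: "veq v w \<Longrightarrow> veq w v"
  by (auto simp: vnull_def vdiff_def nullf_def elim: eventually_mono)

lemma veq_trans: assumes "veq u v" "veq v w" shows "veq u w"
proof -
  have 1: "AE t in Mp. fst u t - fst v t = 0" "AE t in Mp. fst v t - fst w t = 0"
    "AE t in Mm. snd u t - snd v t = 0" "AE t in Mm. snd v t - snd w t = 0"
    using assms by (auto simp: vnull_def vdiff_def nullf_def)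
  have "AE t in Mp. fst u t - fst w t = 0" using 1(1,2) by eventually_elim simp
  moreover have "AE t in Mm. snd u t - snd w t = 0" using 1(3,4) by eventually_elim simp
  ultimately show ?thesis by (simp add: vnull_def vdiff_def nullf_def)
qed

lemma veq_vzero_iff: "veq v vzero \<longleftrightarrow> vn v" by (simp add: vdiff_def vzero_def)

lemma veq_vsum:
  assumes "finite I" "\<And>i. i \<in> I \<Longrightarrow> veq (u i) (w i)"
  shows "veq (vsum I a u) (vsum I a w)"
proof -
  have "AE t in Mp. \<forall>i\<in>I. fst (u i) t - fst (w i) t = 0"
    using assms by (intro eventually_ball_finite) (auto simp: vnull_def nullf_def vdiff_def)
  then have 1: "AE t in Mp. fst (vsum I a u) t - fst (vsum I a w) t = 0"
  proof eventually_elim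
    case (elim t)
    have "fst (vsum I a u) t - fst (vsum I a w) t = (\<Sum>i\<in>I. a i * (fst (u i) t - fst (w i) t))"
      by (simp add: vsum_def sum_subtractf[symmetric] algebra_simps)
    also have "\<dots> = 0" using elim by simp
    finally show ?case .
  qed
  have "AE t in Mm. \<forall>i\<in>I. snd (u i) t - snd (w i) t = 0"
    using assms by (intro eventually_ball_finite) (auto simp: vnull_def nullf_def vdiff_def)
  then have 2: "AE t in Mm. snd (vsum I a u) t - snd (vsum I a w) t = 0"
  proof eventually_elim
    case (elim t)
    have "snd (vsum I a u) t - snd (vsum I a w) t = (\<Sum>i\<in>I. a i * (snd (u i) t - snd (w i) t))"
      by (simp add: vsum_def sum_subtractf[symmetric] algebra_simps)
    also have "\<dots> = 0" using elim by simp
    finally show ?case .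
  qed
  from 1 2 show ?thesis by (simp add: vnull_def nullf_def vdiff_def)
qed

lemma veq_vlin: "veq u u' \<Longrightarrow> veq w w' \<Longrightarrow> veq (vlin a u b w) (vlin a u' b w')"
proof -
  assume 1: "veq u u'" and 2: "veq w w'"
  have p: "AE t in Mp. fst u t - fst u' t = 0" "AE t in Mp. fst w t - fst w' t = 0"
    and m: "AE t in Mm. snd u t - snd u' t = 0" "AE t in Mm. snd w t - snd w' t = 0"
    using 1 2 by (auto simp: vnull_def nullf_def vdiff_def)
  have "AE t in Mp. fst (vlin a u b w) t - fst (vlin a u' b w') t = 0"
    using p by eventually_elim (simp add: vlin_def algebra_simps)
  moreover have "AE t in Mm. snd (vlin a u b w) t - snd (vlin a u' b w') t = 0"
    using m by eventually_elim (simp add: vlin_def algebra_simps)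
  ultimately show ?thesis by (simp add: vnull_def nullf_def vdiff_def)
qed

lemma vn_cmult_cancel: assumes "vn (vlin a v 0 vzero)" "a \<noteq> 0" shows "vn v"
proof -
  have "AE t in Mp. a * fst v t = 0" "AE t in Mm. a * snd v t = 0"
    using assms(1) by (auto simp: vnull_def nullf_def vlin_def vzero_def)
  then have "AE t in Mp. fst v t = 0" "AE t in Mm. snd v t = 0"
    using assms(2) by (auto elim: eventually_mono)
  then show ?thesis by (simp add: vnull_def nullf_def)
qed

lemma indep_mod_iff_vsum: "indep_mod Mp Mm F \<longleftrightarrow> (\<forall>a. vn (vsum F a id) \<longrightarrow> (\<forall>v\<in>F. a v = 0))"
  by (simp add: indep_mod_def vsum_def)

lemma indep_mod_veq_eq:
  assumes "indep_mod Mp Mm F" "finite F" "f \<in> F" "g \<in> F" "veq f g"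
  shows "f = g"
proof (rule ccontr)
  assume "f \<noteq> g"
  with assms have "vn (vsum F (\<lambda>w. if w = f then 1 else if w = g then -1 else 0) id)"
    by (simp add: vsum_plus_minus)
  with assms(1,3) show False unfolding indep_mod_iff_vsum by fastforce
qed

lemma indep_mod_coeffs:
  fixes k :: nat
  assumes fin: "finite F" and ind: "indep_mod Mp Mm F"
    and co: "\<And>f. f \<in> F \<Longrightarrow> veq f (vsum {1..k} (co f) e)" and inj: "inj_on co F"
    and t: "finite t" "t \<subseteq> co ` F" and z: "\<And>j. (\<Sum>x\<in>t. u x * x j) = 0"
  shows "\<forall>x\<in>t. u x = 0"
proof -
  define Ft where "Ft = {f\<in>F. co f \<in> t}"
  define a where "a f = (if co f \<in> t then u (co f) else 0)" for f
  have bij: "co ` Ft = t" using t(2) by (auto simp: Ft_def)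
  have injt: "inj_on co Ft" using inj by (rule inj_on_subset) (auto simp: Ft_def)
  have sumeq: "(\<Sum>f\<in>F. a f * co f j) = 0" for j
  proof -
    have "(\<Sum>f\<in>F. a f * co f j) = (\<Sum>f\<in>F. if co f \<in> t then u (co f) * co f j else 0)"
      by (rule sum.cong) (simp_all add: a_def)
    also have "\<dots> = (\<Sum>f\<in>Ft. u (co f) * co f j)"
      unfolding Ft_def using fin by (simp add: sum.inter_filter)
    also have "\<dots> = (\<Sum>x\<in>t. u x * x j)"
      using sum.reindex[OF injt, of "\<lambda>x. u x * x j"] bij by simp
    finally show ?thesis using z by simp
  qed
  have "veq (vsum F a id) (vsum F a (\<lambda>f. vsum {1..k} (co f) e))"
    by (rule veq_vsum[OF fin]) (use co in simp)
  also have "vsum F a (\<lambda>f. vsum {1..k} (co f) e) = vsum {1..k} (\<lambda>j. \<Sum>f\<in>F. a f * co f j) e"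
    by (rule vsum_vsum[OF fin]) simp
  also have "\<dots> = vzero" by (simp add: vsum_def vzero_def sumeq)
  finally have "vn (vsum F a id)" by (simp add: vdiff_def vzero_def id_def)
  with ind have a0: "\<forall>v\<in>F. a v = 0" unfolding indep_mod_iff_vsum by blast
  show ?thesis
  proof
    fix x assume "x \<in> t"
    then obtain f where "f \<in> F" "x = co f" using t(2) by auto
    then show "u x = 0" using a0 \<open>x \<in> t\<close> by (auto simp: a_def)
  qed
qed

lemma card_indep_le_span:
  assumes fin: "finite F" and ind: "indep_mod Mp Mm F"
    and sp: "\<And>f. f \<in> F \<Longrightarrow> \<exists>b. veq f (vsum {1..k} b e)"
  shows "card F \<le> k"
proof -
  obtain co where co: "\<And>f. f \<in> F \<Longrightarrow> veq f (vsum {1..k} (co f) e)" using sp by metis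
  define co' where "co' f j = (if j \<in> {1..k} then co f j else 0)" for f j
  have co': "veq f (vsum {1..k} (co' f) e)" if "f \<in> F" for f
  proof -
    have "vsum {1..k} (co' f) e = vsum {1..k} (co f) e" by (rule vsum_cong) (simp add: co'_def)
    then show ?thesis using co[OF that] by simp
  qed
  have inj: "inj_on co' F"
  proof (rule inj_onI)
    fix f g assume fg: "f \<in> F" "g \<in> F" "co' f = co' g"
    have "veq f (vsum {1..k} (co' g) e)" using co'[OF fg(1)] fg(3) by simp
    then have "veq f g" using veq_trans veq_sym[OF co'[OF fg(2)]] by blast
    then show "f = g" using indep_mod_veq_eq[OF ind fin fg(1,2)] by blast
  qed
  have "card (co' ` F) \<le> k"
  proof (rule card_le_if_coeff_independent)
    show "finite (co' ` F)" using fin by simp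
    show "\<And>x j. x \<in> co' ` F \<Longrightarrow> j \<notin> {1..k} \<Longrightarrow> x j = 0" by (auto simp: co'_def)
    show "\<forall>x\<in>t. u x = 0" if "finite t" "t \<subseteq> co' ` F" "\<And>j. (\<Sum>x\<in>t. u x * x j) = 0" for t u
      by (rule indep_mod_coeffs[OF fin ind co' inj that])
  qed
  then show ?thesis using card_image[OF inj] by simp
qed

end

section \<open>Root spaces of \<open>\<widehat>A\<close>\<close>

locale Ahat_pair = measure_pair +
  fixes A :: "(vec \<times> vec) set"
  assumes A_char: "\<And>fp fm gp gm. ((fp, fm), (gp, gm)) \<in> A \<longleftrightarrow>
    (\<exists>c. Tstar_graph Mp fp gp c \<and> Tstar_graph Mm fm gm c \<and> integral\<^sup>L Mp fp = integral\<^sup>L Mm fm)"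
begin

abbreviation "R \<equiv> rootsp Mp Mm A"

text \<open>\<open>shift_step z u v\<close> says \<open>(\<widehat>A - z) v = u\<close> up to null functions.\<close>

definition shift_step :: "complex \<Rightarrow> vec \<Rightarrow> vec \<Rightarrow> bool" where
  "shift_step z u v \<longleftrightarrow> (\<exists>c. shift_eq Mp z (fst v) (fst u) c \<and> shift_eq Mm z (snd v) (snd u) c
      \<and> integral\<^sup>L Mp (fst v) = integral\<^sup>L Mm (snd v))"

lemma mem_A_iff: "(v, w) \<in> A \<longleftrightarrow>
    (\<exists>c. Tstar_graph Mp (fst v) (fst w) c \<and> Tstar_graph Mm (snd v) (snd w) c \<and> integral\<^sup>L Mp (fst v) = integral\<^sup>L Mm (snd v))"
  using A_char[of "fst v" "snd v" "fst w" "snd w"] by simp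

lemma shift_step_measurable: "shift_step z u v \<Longrightarrow> vmeasurable v"
  by (auto simp: shift_step_def shift_eq_def vmeasurable_def L2_def P.borel_measurable_M_iff N.borel_measurable_M_iff)

lemma shift_step_cong:
  assumes "shift_step z u v" "veq v v'" "vmeasurable v'"
  shows "shift_step z u v'"
proof -
  obtain c where c: "shift_eq Mp z (fst v) (fst u) c" "shift_eq Mm z (snd v) (snd u) c"
    "integral\<^sup>L Mp (fst v) = integral\<^sup>L Mm (snd v)" using assms(1) by (auto simp: shift_step_def)
  have ae: "AE t in Mp. fst v t = fst v' t" "AE t in Mm. snd v t = snd v' t"
    using assms(2) by (auto simp: vnull_def nullf_def vdiff_def elim: eventually_mono)
  have m: "fst v' \<in> borel_measurable Mp" "snd v' \<in> borel_measurable Mm"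
    using assms(3) by (auto simp: vmeasurable_def P.borel_measurable_M_iff N.borel_measurable_M_iff)
  have mv: "fst v \<in> borel_measurable Mp" "snd v \<in> borel_measurable Mm"
    using c by (auto simp: shift_eq_def L2_def)
  have "integral\<^sup>L Mp (fst v') = integral\<^sup>L Mp (fst v)"
    by (rule integral_cong_AE[OF m(1) mv(1)]) (use ae(1) in \<open>auto elim: eventually_mono\<close>)
  moreover have "integral\<^sup>L Mm (snd v') = integral\<^sup>L Mm (snd v)"
    by (rule integral_cong_AE[OF m(2) mv(2)]) (use ae(2) in \<open>auto elim: eventually_mono\<close>)
  ultimately show ?thesis unfolding shift_step_def
    using P.shift_eq_cong[OF c(1) ae(1) m(1)] N.shift_eq_cong[OF c(2) ae(2) m(2)] c(3) by metis
qed

lemma shift_step_null: assumes "shift_step z u v" "vn v" shows "vn u"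
proof -
  obtain c where c: "shift_eq Mp z (fst v) (fst u) c" "shift_eq Mm z (snd v) (snd u) c"
    using assms(1) by (auto simp: shift_step_def)
  from assms(2) have "AE t in Mp. fst v t = 0" "AE t in Mm. snd v t = 0"
    by (auto simp: vnull_def nullf_def)
  from P.shift_eq_null[OF c(1) this(1)] N.shift_eq_null[OF c(2) this(2)] show ?thesis
    by (simp add: vnull_def nullf_def)
qed

lemma shift_step_vlin: assumes "shift_step z u1 v1" "shift_step z u2 v2" shows "shift_step z (vlin a u1 b u2) (vlin a v1 b v2)"
proof -
  obtain c1 where c1: "shift_eq Mp z (fst v1) (fst u1) c1" "shift_eq Mm z (snd v1) (snd u1) c1"
    "integral\<^sup>L Mp (fst v1) = integral\<^sup>L Mm (snd v1)" using assms(1) by (auto simp: shift_step_def)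
  obtain c2 where c2: "shift_eq Mp z (fst v2) (fst u2) c2" "shift_eq Mm z (snd v2) (snd u2) c2"
    "integral\<^sup>L Mp (fst v2) = integral\<^sup>L Mm (snd v2)" using assms(2) by (auto simp: shift_step_def)
  have i: "integrable Mp (fst v1)" "integrable Mp (fst v2)" "integrable Mm (snd v1)" "integrable Mm (snd v2)"
    using c1 c2 P.shift_eq_integrable N.shift_eq_integrable by blast+
  have "integral\<^sup>L Mp (\<lambda>t. a * fst v1 t + b * fst v2 t) = a * integral\<^sup>L Mp (fst v1) + b * integral\<^sup>L Mp (fst v2)"
    using i by simp
  moreover have "integral\<^sup>L Mm (\<lambda>t. a * snd v1 t + b * snd v2 t) = a * integral\<^sup>L Mm (snd v1) + b * integral\<^sup>L Mm (snd v2)"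
    using i by simp
  ultimately show ?thesis unfolding shift_step_def vlin_def
    using shift_eq_lincomb[OF c1(1) c2(1), of a b] shift_eq_lincomb[OF c1(2) c2(2), of a b] c1(3) c2(3)
    by (intro exI[of _ "a * c1 + b * c2"]) simp
qed

lemma shift_step_zero: "shift_step z vzero vzero"
  unfolding shift_step_def vzero_def shift_eq_def by (intro exI[of _ 0]) (simp add: L2_zero)

lemma shift_step_vsum: "finite I \<Longrightarrow> (\<And>i. i \<in> I \<Longrightarrow> shift_step z (u i) (v i)) \<Longrightarrow> shift_step z (vsum I a u) (vsum I a v)"
proof (induction I rule: finite_induct)
  case empty
  then show ?case using shift_step_zero by (simp add: vsum_def vzero_def)
next
  case (insert i I)
  have "shift_step z (vlin 1 (vsum I a u) (a i) (u i)) (vlin 1 (vsum I a v) (a i) (v i))"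
    using insert by (intro shift_step_vlin) auto
  moreover have "vlin 1 (vsum I a u) (a i) (u i) = vsum (insert i I) a u"
    "vlin 1 (vsum I a v) (a i) (v i) = vsum (insert i I) a v"
    using insert(1,2) by (auto simp: vlin_def vsum_def add.commute)
  ultimately show ?case by simp
qed

lemma shift_step_cong_rhs: "shift_step z u v \<Longrightarrow> veq u u' \<Longrightarrow> shift_step z u' v"
  unfolding shift_step_def vnull_def nullf_def vdiff_def
  by (auto intro: shift_eq_cong_rhs elim!: eventually_mono)

lemma root_SucD: assumes "v \<in> R z (Suc n)" shows "\<exists>u \<in> R z n. shift_step z u v"
proof -
  from assms obtain w where w: "(v, w) \<in> A"
    and u: "((\<lambda>t. fst w t - z * fst v t), (\<lambda>t. snd w t - z * snd v t)) \<in> R z n" by auto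
  from w obtain c where r: "Tstar_graph Mp (fst v) (fst w) c" "Tstar_graph Mm (snd v) (snd w) c"
    and ie: "integral\<^sup>L Mp (fst v) = integral\<^sup>L Mm (snd v)" by (auto simp: mem_A_iff)
  have s: "shift_eq M z f (\<lambda>t. g t - z * f t) c" if "Tstar_graph M f g c" "spectral_measure M" for M f g
  proof -
    interpret spectral_measure M by fact
    from that(1) have f: "L2 M f" and g: "L2 M g" and ae: "AE t in M. g t = complex_of_real t * f t - c"
      by (auto simp: Tstar_graph_def)
    have [measurable]: "f \<in> borel_measurable M" using f by (simp add: L2_def)
    have "L2 M (\<lambda>t. complex_of_real t * f t - c)"
      by (rule L2_cong[OF g]) (measurable, use ae in \<open>auto elim: eventually_mono\<close>)
    moreover have "AE t in M. (complex_of_real t - z) * f t - c = g t - z * f t"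
      using ae by eventually_elim (simp add: algebra_simps)
    ultimately show ?thesis using f by (simp add: shift_eq_def)
  qed
  have "shift_step z ((\<lambda>t. fst w t - z * fst v t), (\<lambda>t. snd w t - z * snd v t)) v"
    unfolding shift_step_def using s[OF r(1) P.spectral_measure_axioms] s[OF r(2) N.spectral_measure_axioms] ie by auto
  with u show ?thesis by blast
qed

lemma root_SucI:
  assumes cl: "\<And>x x'. x \<in> R z n \<Longrightarrow> veq x x' \<Longrightarrow> vmeasurable x' \<Longrightarrow> x' \<in> R z n"
    and u: "u \<in> R z n" and d: "shift_step z u v"
  shows "v \<in> R z (Suc n)"
proof -
  from d obtain c where c: "shift_eq Mp z (fst v) (fst u) c" "shift_eq Mm z (snd v) (snd u) c"
    "integral\<^sup>L Mp (fst v) = integral\<^sup>L Mm (snd v)" by (auto simp: shift_step_def)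
  define w :: vec where "w = ((\<lambda>t. complex_of_real t * fst v t - c), (\<lambda>t. complex_of_real t * snd v t - c))"
  have "(v, w) \<in> A" unfolding mem_A_iff w_def Tstar_graph_def using c by (auto simp: shift_eq_def)
  moreover have "((\<lambda>t. fst w t - z * fst v t), (\<lambda>t. snd w t - z * snd v t)) \<in> R z n"
  proof (rule cl[OF u])
    have ae: "AE t in Mp. (complex_of_real t - z) * fst v t - c = fst u t"
      "AE t in Mm. (complex_of_real t - z) * snd v t - c = snd u t" using c by (auto simp: shift_eq_def)
    have "AE t in Mp. fst u t - (fst w t - z * fst v t) = 0" using ae(1)
      by eventually_elim (simp add: w_def algebra_simps)
    moreover have "AE t in Mm. snd u t - (snd w t - z * snd v t) = 0" using ae(2)
      by eventually_elim (simp add: w_def algebra_simps)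
    ultimately show "veq u ((\<lambda>t. fst w t - z * fst v t), (\<lambda>t. snd w t - z * snd v t))"
      by (simp add: vnull_def nullf_def vdiff_def)
    have [measurable]: "fst v \<in> borel_measurable borel" "snd v \<in> borel_measurable borel"
      using shift_step_measurable[OF d] by (auto simp: vmeasurable_def)
    show "vmeasurable ((\<lambda>t. fst w t - z * fst v t), (\<lambda>t. snd w t - z * snd v t))"
      unfolding vmeasurable_def w_def by simp
  qed
  ultimately show ?thesis
    unfolding rootsp.simps mem_Collect_eq by (intro exI[of _ w] conjI)
qed

lemma root_veq_closed: "x \<in> R z n \<Longrightarrow> veq x x' \<Longrightarrow> vmeasurable x' \<Longrightarrow> x' \<in> R z n"
proof (induction n arbitrary: x x')
  case 0
  have "veq x vzero" using 0(1) veq_vzero_iff by simp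
  then have "veq x' vzero" using veq_trans[OF veq_sym[OF 0(2)]] by blast
  then show ?case using veq_vzero_iff by simp
next
  case (Suc n)
  from root_SucD[OF Suc.prems(1)] obtain u where u: "u \<in> R z n" "shift_step z u x" by blast
  have "shift_step z u x'" by (rule shift_step_cong[OF u(2) Suc.prems(2,3)])
  show ?case by (rule root_SucI[OF _ u(1) \<open>shift_step z u x'\<close>]) (rule Suc.IH)
qed

lemma root_Suc_iff: "v \<in> R z (Suc n) \<longleftrightarrow> (\<exists>u \<in> R z n. shift_step z u v)"
proof
  show "v \<in> R z (Suc n) \<Longrightarrow> \<exists>u \<in> R z n. shift_step z u v" by (rule root_SucD)
  show "\<exists>u \<in> R z n. shift_step z u v \<Longrightarrow> v \<in> R z (Suc n)"
  proof -
    assume "\<exists>u \<in> R z n. shift_step z u v"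
    then obtain u where "u \<in> R z n" "shift_step z u v" by blast
    then show ?thesis by (intro root_SucI) (auto intro: root_veq_closed)
  qed
qed

lemma root_1_iff: "v \<in> R z 1 \<longleftrightarrow> shift_step z vzero v"
proof -
  have "(\<exists>u \<in> R z 0. shift_step z u v) \<longleftrightarrow> shift_step z vzero v"
  proof
    assume "\<exists>u \<in> R z 0. shift_step z u v"
    then obtain u where "vn u" "shift_step z u v" by auto
    then show "shift_step z vzero v" using shift_step_cong_rhs veq_vzero_iff by blast
  next
    assume "shift_step z vzero v"
    moreover have "vzero \<in> R z 0" by (simp add: vzero_def vnull_def nullf_def)
    ultimately show "\<exists>u \<in> R z 0. shift_step z u v" by blast
  qed
  then show ?thesis using root_Suc_iff[of v z 0] by simp
qed

end

definition chain_index :: "nat \<Rightarrow> enat \<Rightarrow> nat set" where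
  "chain_index n K = {j. 1 \<le> j \<and> j \<le> n \<and> enat j \<le> K}"

lemma finite_chain_index: "finite (chain_index n K)" unfolding chain_index_def by (rule finite_subset[of _ "{..n}"]) auto

lemma Icc_1_Suc_eq_insert: "{1..Suc k} = insert 1 {Suc 1..Suc k}" by auto

lemma chain_index_Suc:
  assumes "1 \<le> K"
  shows "chain_index (Suc n) K = insert 1 (Suc ` {j \<in> chain_index n K. enat (Suc j) \<le> K})"
proof
  show "insert 1 (Suc ` {j \<in> chain_index n K. enat (Suc j) \<le> K}) \<subseteq> chain_index (Suc n) K"
    using assms by (auto simp: chain_index_def one_enat_def)
  show "chain_index (Suc n) K \<subseteq> insert 1 (Suc ` {j \<in> chain_index n K. enat (Suc j) \<le> K})"
  proof
    fix j assume j: "j \<in> chain_index (Suc n) K"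
    show "j \<in> insert 1 (Suc ` {j \<in> chain_index n K. enat (Suc j) \<le> K})"
    proof (cases "j = 1")
      case False
      then obtain i where i: "j = Suc i" "1 \<le> i" using j by (cases j) (auto simp: chain_index_def)
      have "enat i \<le> K" using j i(1) by (auto simp: chain_index_def intro: order_trans[of _ "enat (Suc i)"])
      then show ?thesis using j i by (auto simp: chain_index_def)
    qed simp
  qed
qed

text \<open>Chain vectors are indexed from \<open>1\<close>; \<open>K = \<infinity>\<close> encodes an infinite chain.\<close>
locale jordan_chain = Ahat_pair +
  fixes z :: complex and e :: "nat \<Rightarrow> vec" and K :: enat
  assumes length_pos: "1 \<le> K"
    and eigenvector: "shift_step z vzero (e 1)" and eigenvector_nonnull: "\<not> vn (e 1)"
    and eigenspace_span: "\<And>v. shift_step z vzero v \<Longrightarrow> \<exists>\<alpha>. veq v (vsum {1} (\<lambda>_. \<alpha>) e)"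
    and chain_step: "\<And>j. 1 \<le> j \<Longrightarrow> enat (Suc j) \<le> K \<Longrightarrow> shift_step z (e j) (e (Suc j))"
    and chain_maximal: "\<And>k x. K = enat k \<Longrightarrow> \<not> shift_step z (e k) x"
begin

lemma chain_in_root: "1 \<le> j \<Longrightarrow> enat j \<le> K \<Longrightarrow> e j \<in> R z j"
proof (induction j)
  case 0 then show ?case by simp
next
  case (Suc j)
  show ?case
  proof (cases "j = 0")
    case True
    then show ?thesis using eigenvector root_1_iff by simp
  next
    case False
    then have "e j \<in> R z j" using Suc by (intro Suc.IH) (auto intro: order_trans[of _ "enat (Suc j)"])
    moreover have "shift_step z (e j) (e (Suc j))" using False Suc.prems by (intro chain_step) auto
    ultimately show ?thesis using root_Suc_iff by blast
  qed
qed

lemma enat_eq_if_between: "enat i \<le> K \<Longrightarrow> \<not> enat (Suc i) \<le> K \<Longrightarrow> K = enat i"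
  by (cases K) auto

lemma shift_step_chain_vsum:
  assumes "finite J" "\<And>j. j \<in> J \<Longrightarrow> 1 \<le> j \<and> enat (Suc j) \<le> K"
  shows "shift_step z (vsum J b e) (vsum J b (\<lambda>j. e (Suc j)))"
  using assms by (intro shift_step_vsum) (auto intro: chain_step)

text \<open>The last vector of a finite chain is not in the range of \<open>\<widehat>A - z\<close>, even modulo
  the earlier chain vectors.\<close>
lemma chain_top_coeff_zero:
  assumes v: "shift_step z u v" and u: "veq u (vlin 1 (vsum J b e) c (e k))" and k: "K = enat k"
    and J: "finite J" "\<And>j. j \<in> J \<Longrightarrow> 1 \<le> j \<and> enat (Suc j) \<le> K"
  shows "c = 0"
proof (rule ccontr)
  assume c: "c \<noteq> 0"
  define y where "y = vsum J b (\<lambda>j. e (Suc j))"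
  have "shift_step z (vlin (1 / c) u (- 1 / c) (vsum J b e)) (vlin (1 / c) v (- 1 / c) y)"
    unfolding y_def by (rule shift_step_vlin[OF v shift_step_chain_vsum[OF J]])
  moreover have "veq (vlin (1 / c) u (- 1 / c) (vsum J b e))
      (vlin (1 / c) (vlin 1 (vsum J b e) c (e k)) (- 1 / c) (vsum J b e))"
    using veq_vlin[OF u veq_refl] by blast
  moreover have "vlin (1 / c) (vlin 1 (vsum J b e) c (e k)) (- 1 / c) (vsum J b e) = e k"
    using c by (simp add: vlin_def prod_eq_iff fun_eq_iff field_simps)
  ultimately have "shift_step z (e k) (vlin (1 / c) v (- 1 / c) y)" using shift_step_cong_rhs by simp
  with chain_maximal[OF k] show False by blast
qed

lemma root_span: "v \<in> R z n \<Longrightarrow> \<exists>b. veq v (vsum (chain_index n K) b e)"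
proof (induction n arbitrary: v)
  case 0
  then have "vn v" by simp
  moreover have "chain_index 0 K = {}" by (auto simp: chain_index_def)
  moreover have "vsum {} (\<lambda>_. 0) e = vzero" by (simp add: vsum_def vzero_def)
  ultimately have "veq v (vsum (chain_index 0 K) (\<lambda>_. 0) e)" by (simp only: veq_vzero_iff)
  then show ?case by blast
next
  case (Suc n)
  from Suc.prems obtain u where u: "u \<in> R z n" "shift_step z u v" using root_Suc_iff by blast
  from Suc.IH[OF u(1)] obtain b where b: "veq u (vsum (chain_index n K) b e)" by blast
  define J' where "J' = {j \<in> chain_index n K. enat (Suc j) \<le> K}"
  have finJ': "finite J'" using finite_chain_index[of n K] by (auto simp: J'_def)
  have J'_step: "\<And>j. j \<in> J' \<Longrightarrow> 1 \<le> j \<and> enat (Suc j) \<le> K" by (auto simp: J'_def chain_index_def)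
  define y where "y = vsum J' b (\<lambda>j. e (Suc j))"
  have Dy: "shift_step z (vsum J' b e) y"
    unfolding y_def by (rule shift_step_chain_vsum[OF finJ' J'_step])
  have top_zero: "b i = 0" if i: "i \<in> chain_index n K - J'" for i
  proof -
    have k: "K = enat i" using i by (auto simp: J'_def chain_index_def intro: enat_eq_if_between)
    then have "chain_index n K = insert i J'"
      using i by (auto simp: J'_def chain_index_def dest: enat_eq_if_between)
    then have "vsum (chain_index n K) b e = vlin 1 (vsum J' b e) (b i) (e i)"
      using vsum_insert[OF finJ'] i by simp
    then show ?thesis using chain_top_coeff_zero[OF u(2) _ k finJ' J'_step] b by simp
  qed
  have "vsum (chain_index n K) b e = vsum J' b e"
  proof (rule vsum_mono_neutral[OF finite_chain_index])
    show "J' \<subseteq> chain_index n K" by (auto simp: J'_def)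
  qed (rule top_zero)
  then have "shift_step z (vsum J' b e) v" using shift_step_cong_rhs[OF u(2)] b by simp
  from shift_step_vlin[OF this Dy, of 1 "-1"]
  have "shift_step z (vlin 1 (vsum J' b e) (-1) (vsum J' b e)) (vlin 1 v (-1) y)" .
  moreover have "vlin 1 (vsum J' b e) (-1) (vsum J' b e) = vzero"
    by (simp add: vlin_def vzero_def)
  ultimately have "shift_step z vzero (vlin 1 v (-1) y)" by simp
  from eigenspace_span[OF this] obtain \<alpha> where al: "veq (vlin 1 v (-1) y) (vsum {1} (\<lambda>_. \<alpha>) e)" by blast
  define b' where "b' j = (if j = 1 then \<alpha> else b (j - 1))" for j
  have 1: "1 \<notin> Suc ` J'" by (auto simp: J'_def chain_index_def)
  have "vsum (chain_index (Suc n) K) b' e = vlin 1 (vsum (Suc ` J') b' e) \<alpha> (e 1)"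
    unfolding chain_index_Suc[OF length_pos] J'_def[symmetric]
    by (subst vsum_insert) (use finJ' 1 in \<open>simp_all add: b'_def\<close>)
  also have "vsum (Suc ` J') b' e = y"
    unfolding y_def by (simp add: vsum_reindex b'_def) (rule vsum_cong, auto simp: J'_def chain_index_def)
  finally have eqs: "vsum (chain_index (Suc n) K) b' e = vlin 1 y \<alpha> (e 1)" .
  have "veq (vlin 1 (vlin 1 v (-1) y) 1 y) (vlin 1 (vsum {1} (\<lambda>_. \<alpha>) e) 1 y)"
    by (rule veq_vlin[OF al veq_refl])
  moreover have "vlin 1 (vlin 1 v (-1) y) 1 y = v" by (simp add: vlin_def)
  moreover have "vlin 1 (vsum {1} (\<lambda>_. \<alpha>) e) 1 y = vlin 1 y \<alpha> (e 1)"
    by (simp add: vlin_def vsum_def prod_eq_iff fun_eq_iff add.commute)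
  ultimately have "veq v (vlin 1 y \<alpha> (e 1))" by simp
  then show ?case unfolding eqs[symmetric] by blast
qed
end

context jordan_chain begin

lemma chain_vsum_null: "enat k \<le> K \<Longrightarrow> vn (vsum {1..k} a e) \<Longrightarrow> \<forall>j\<in>{1..k}. a j = 0"
proof (induction k arbitrary: a)
  case 0 then show ?case by simp
next
  case (Suc k)
  define u where "u j = (if j = 1 then vzero else e (j - 1))" for j
  have Du: "shift_step z (u j) (e j)" if "j \<in> {1..Suc k}" for j
  proof (cases "j = 1")
    case True then show ?thesis using eigenvector by (simp add: u_def)
  next
    case False
    then have "1 \<le> j - 1" "enat (Suc (j - 1)) \<le> K" using that Suc.prems(1)
      by (auto intro: order_trans[of _ "enat (Suc k)"])
    from chain_step[OF this] show ?thesis using False that by (simp add: u_def)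
  qed
  have "shift_step z (vsum {1..Suc k} a u) (vsum {1..Suc k} a e)"
    by (rule shift_step_vsum) (auto intro: Du)
  from shift_step_null[OF this Suc.prems(2)] have nu: "vn (vsum {1..Suc k} a u)" .
  have "vsum {1..Suc k} a u = vlin 1 (vsum {Suc 1..Suc k} a u) (a 1) (u 1)"
    unfolding Icc_1_Suc_eq_insert by (rule vsum_insert) auto
  also have "vsum {Suc 1..Suc k} a u = vsum {1..k} (\<lambda>i. a (Suc i)) e"
    unfolding vsum_shift by (rule vsum_cong_vec) (auto simp: u_def)
  also have "vlin 1 (vsum {1..k} (\<lambda>i. a (Suc i)) e) (a 1) (u 1) = vsum {1..k} (\<lambda>i. a (Suc i)) e"
    by (simp add: vlin_def u_def vzero_def)
  finally have "vn (vsum {1..k} (\<lambda>i. a (Suc i)) e)" using nu by simp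
  then have aS: "\<forall>j\<in>{1..k}. a (Suc j) = 0" using Suc.IH Suc.prems(1)
    by (meson Suc_ile_eq order_less_imp_le)
  have "vsum {1..Suc k} a e = vlin 1 (vsum {Suc 1..Suc k} a e) (a 1) (e 1)"
    unfolding Icc_1_Suc_eq_insert by (rule vsum_insert) auto
  also have "vsum {Suc 1..Suc k} a e = vsum {1..k} (\<lambda>i. a (Suc i)) (\<lambda>i. e (Suc i))"
    by (rule vsum_shift)
  also have "\<dots> = vsum {1..k} (\<lambda>i. 0) (\<lambda>i. e (Suc i))" by (rule vsum_cong) (use aS in auto)
  also have "vlin 1 (vsum {1..k} (\<lambda>i. 0) (\<lambda>i. e (Suc i))) (a 1) (e 1) = vlin (a 1) (e 1) 0 vzero"
    by (simp add: vlin_def vsum_def vzero_def)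
  finally have "vn (vlin (a 1) (e 1) 0 vzero)" using Suc.prems(2) by simp
  then have "a 1 = 0" using vn_cmult_cancel eigenvector_nonnull by blast
  with aS show ?case by (metis atLeastAtMost_iff le_antisym not_less_eq_eq Suc_pred' le_zero_eq One_nat_def neq0_conv)
qed

end

context jordan_chain begin

lemma chain_inj: assumes "enat k \<le> K" shows "inj_on e {1..k}"
proof (rule inj_onI, rule ccontr)
  fix i j assume ij: "i \<in> {1..k}" "j \<in> {1..k}" "e i = e j" "i \<noteq> j"
  have "vn (vsum {1..k} (\<lambda>l. if l = i then 1 else if l = j then -1 else 0) e)"
    using vsum_plus_minus[of "{1..k}" i j e] ij by (simp add: vnull_def nullf_def vdiff_def)
  from chain_vsum_null[OF assms this] ij(1) have "(if i = i then 1 else if i = j then -1 else 0 :: complex) = 0"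
    by blast
  then show False by simp
qed

lemma chain_indep_mod: assumes "enat k \<le> K" shows "indep_mod Mp Mm (e ` {1..k})"
  unfolding indep_mod_iff_vsum
proof (intro allI impI ballI)
  fix a v assume n: "vn (vsum (e ` {1..k}) a id)" and v: "v \<in> e ` {1..k}"
  have "vsum (e ` {1..k}) a id = vsum {1..k} (\<lambda>i. a (e i)) e"
    using vsum_reindex[OF chain_inj[OF assms], of a id] by simp
  with n have "vn (vsum {1..k} (\<lambda>i. a (e i)) e)" by simp
  from chain_vsum_null[OF assms this] v show "a v = 0" by auto
qed

lemma root_space_span: assumes "v \<in> (\<Union>n. R z n)" "K = enat k" shows "\<exists>b. veq v (vsum {1..k} b e)"
proof -
  from assms(1) obtain n where "v \<in> R z n" by blast
  from root_span[OF this] obtain b where b: "veq v (vsum (chain_index n K) b e)" by blast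
  define b' where "b' j = (if j \<in> chain_index n K then b j else 0)" for j
  have "vsum {1..k} b' e = vsum (chain_index n K) b' e"
    by (rule vsum_mono_neutral) (use assms(2) in \<open>auto simp: chain_index_def b'_def\<close>)
  also have "\<dots> = vsum (chain_index n K) b e" by (rule vsum_cong) (simp add: b'_def)
  finally have "veq v (vsum {1..k} b' e)" using b by simp
  then show ?thesis by blast
qed

lemma chain_vecs_in_root: assumes k: "enat k \<le> K" shows "e ` {1..k} \<subseteq> (\<Union>n. R z n)"
proof
  fix x assume "x \<in> e ` {1..k}"
  then obtain j where j: "x = e j" "1 \<le> j" "j \<le> k" by auto
  have "enat j \<le> K" using j(3) k by (auto intro: order_trans[of _ "enat k"])
  then show "x \<in> (\<Union>n. R z n)" using chain_in_root j by blast
qed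

lemma alg_mult_eq: "alg_mult Mp Mm A z = K"
  unfolding alg_mult_def
proof (rule dim_mod_eqI)
  fix k assume k: "enat k \<le> K"
  show "\<exists>F. finite F \<and> F \<subseteq> (\<Union>n. R z n) \<and> indep_mod Mp Mm F \<and> card F = k"
    using chain_vecs_in_root[OF k] chain_indep_mod[OF k] card_image[OF chain_inj[OF k]]
    by (intro exI[of _ "e ` {1..k}"]) auto
next
  fix F assume F: "finite F" "F \<subseteq> (\<Union>n. R z n)" "indep_mod Mp Mm F"
  show "enat (card F) \<le> K"
  proof (cases K)
    case (enat k)
    have "card F \<le> k"
      by (rule card_indep_le_span[OF F(1,3)]) (use F(2) root_space_span[OF _ enat] in blast)
    then show ?thesis using enat by simp
  qed simp
qed

lemma eigenvalue: "z \<in> op_sigma_p Mp Mm A"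
  using root_1_iff eigenvector eigenvector_nonnull unfolding op_sigma_p_def by blast

lemma geom_mult_eq: "geom_mult Mp Mm A z = 1"
  unfolding geom_mult_def
proof (rule dim_mod_eqI)
  fix k :: nat assume k: "enat k \<le> 1"
  then have kK: "enat k \<le> K" using length_pos order_trans by blast
  have "e 1 \<in> R z 1" using root_1_iff eigenvector by blast
  moreover have "{1..k} \<subseteq> {1}" using k by (auto simp: one_enat_def)
  ultimately have "e ` {1..k} \<subseteq> R z 1" by blast
  then show "\<exists>F. finite F \<and> F \<subseteq> R z 1 \<and> indep_mod Mp Mm F \<and> card F = k"
    using chain_indep_mod[OF kK] card_image[OF chain_inj[OF kK]]
    by (intro exI[of _ "e ` {1..k}"]) auto
next
  fix F assume F: "finite F" "F \<subseteq> R z 1" "indep_mod Mp Mm F"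
  have "card F \<le> 1"
  proof (rule card_indep_le_span[OF F(1,3)])
    fix f assume "f \<in> F"
    then have "shift_step z vzero f" using F(2) root_1_iff by blast
    from eigenspace_span[OF this] show "\<exists>b. veq f (vsum {1..1} b e)" by auto
  qed
  then show "enat (card F) \<le> 1" by (simp add: one_enat_def)
qed

end

lemma real_preimage: "{t. complex_of_real t = z} = (if Im z = 0 then {Re z} else {})"
  by (auto simp: complex_eq_iff)

lemma norm_inv_pow_sq: "(cmod (1 / (complex_of_real t - z)^j))^2 = 1 / (cmod (complex_of_real t - z))^(2*j)"
  by (simp add: norm_divide norm_power power_mult power_divide) (metis mult.commute power_mult)

lemma nn_integral_off_point: assumes "1 \<le> j"
  shows "(\<integral>\<^sup>+ t. indicator {t. complex_of_real t \<noteq> z} t * ennreal (1 / (cmod (complex_of_real t - z))^(2*j)) \<partial>M)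
    = (\<integral>\<^sup>+ t. ennreal (1 / (cmod (complex_of_real t - z))^(2*j)) \<partial>M)"
  using assms by (intro nn_integral_cong) (auto split: split_indicator)

lemma set_integral_off_point: assumes "1 \<le> i"
  shows "set_lebesgue_integral M {t. complex_of_real t \<noteq> z} (\<lambda>t. 1 / (complex_of_real t - z)^i)
    = (\<integral> t. 1 / (complex_of_real t - z)^i \<partial>M)"
  unfolding set_lebesgue_integral_def
  using assms by (intro Bochner_Integration.integral_cong) (auto split: split_indicator)

context spectral_measure begin

lemma AE_False_absurd: assumes "AE t in M. False" shows False
proof -
  have "ae_filter M = bot" using assms trivial_limit_def by blast
  then have "emeasure M (space M) = 0" by (simp add: ae_filter_eq_bot_iff)
  with infinite_total show False by simp
qed

lemma sets_real_preimage: "{t. complex_of_real t = z} \<in> sets M"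
  unfolding real_preimage by (simp add: sets_M)

lemma AE_ne_null_point: assumes "emeasure M {t. complex_of_real t = z} = 0"
  shows "AE t in M. complex_of_real t \<noteq> z"
proof -
  have "{t. complex_of_real t = z} \<in> null_sets M" using assms sets_real_preimage by auto
  from AE_not_in[OF this] show ?thesis by simp
qed

lemma real_of_point_mass: assumes "emeasure M {t. complex_of_real t = z} \<noteq> 0"
  shows "z = complex_of_real (Re z) \<and> {t. complex_of_real t = z} = {Re z}"
  using assms unfolding real_preimage by (cases "Im z = 0") (auto simp: complex_eq_iff)

lemma shift_eq_at_atom: assumes "emeasure M {r} \<noteq> 0" "z = complex_of_real r" "shift_eq M z f g c"
  shows "g r = - c"
proof -
  have "AE t in M. (complex_of_real t - z) * f t - c = g t" using assms(3) by (simp add: shift_eq_def)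
  from AE_at_atom[OF assms(1) this] assms(2) show ?thesis by simp
qed

context
  fixes r z assumes zr: "z = complex_of_real r" and atom: "emeasure M {r} \<noteq> 0"
begin

lemma measure_atom_pos: "measure M {r} > 0"
  using atom emeasure_singleton_finite[of r] by (simp add: measure_def enn2real_positive_iff less_top zero_less_iff_neq_zero)

lemma ne_atom_iff: "complex_of_real t \<noteq> z \<longleftrightarrow> t \<noteq> r"
  using zr by auto

lemma eigen_form_atom: assumes "shift_eq M z f (\<lambda>t. 0) c"
  shows "c = 0 \<and> (AE t in M. f t = f r * delta r t)"
proof -
  have c: "c = 0" using shift_eq_at_atom[OF atom zr assms] by simp
  have "AE t in M. f t = f r * delta r t"
    using shift_eq_off_point[OF assms]
  proof eventually_elim
    case (elim t) then show ?case by (cases "t = r") (simp_all add: ne_atom_iff c)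
  qed
  with c show ?thesis by simp
qed

lemma integral_atomic: assumes "f \<in> borel_measurable M" "AE t in M. f t = a * delta r t"
  shows "integral\<^sup>L M f = a * complex_of_real (measure M {r})"
proof -
  have "integral\<^sup>L M f = (\<integral> t. a * delta r t \<partial>M)" by (rule integral_cong_AE) (use assms in auto)
  also have "\<dots> = a * complex_of_real (measure M {r})" using integral_delta by simp
  finally show ?thesis .
qed

end

lemma sigma_p_Q_iff: "z \<in> sigma_p_Q M \<longleftrightarrow> emeasure M {t. complex_of_real t = z} \<noteq> 0"
proof
  assume "z \<in> sigma_p_Q M"
  then obtain f where f: "\<not> nullf M f" "nullf M (\<lambda>t. (complex_of_real t - z) * f t)"
    by (auto simp: sigma_p_Q_def)
  show "emeasure M {t. complex_of_real t = z} \<noteq> 0"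
  proof
    assume "emeasure M {t. complex_of_real t = z} = 0"
    from AE_ne_null_point[OF this] f(2) have "AE t in M. f t = 0"
      by (auto simp: nullf_def elim: eventually_rev_mp)
    with f(1) show False by (simp add: nullf_def)
  qed
next
  assume ne: "emeasure M {t. complex_of_real t = z} \<noteq> 0"
  define r where "r = Re z"
  have z: "z = complex_of_real r" and atom: "emeasure M {r} \<noteq> 0"
    using real_of_point_mass[OF ne] ne by (auto simp: r_def)
  have "L2 M (\<lambda>t. complex_of_real t * delta r t)"
    by (rule L2_cong[OF L2_cmult[OF L2_delta[of r], of "complex_of_real r"]]) (auto simp: delta_def split: split_indicator)
  moreover have "\<not> nullf M (delta r)"
    using AE_at_atom[OF atom, of "\<lambda>t. delta r t = 0"] by (auto simp: nullf_def)
  moreover have "nullf M (\<lambda>t. (complex_of_real t - z) * delta r t)"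
    unfolding nullf_def z by (rule AE_I2) (simp add: delta_def split: split_indicator)
  ultimately show "z \<in> sigma_p_Q M" unfolding sigma_p_Q_def domQ_def using L2_delta[of r] by blast
qed

lemma L2_inv_pow_iff: "L2 M (\<lambda>t. 1 / (complex_of_real t - z)^j) \<longleftrightarrow>
    (\<integral>\<^sup>+ t. ennreal (1 / (cmod (complex_of_real t - z))^(2*j)) \<partial>M) < \<infinity>"
proof -
  have m: "(\<lambda>t. 1 / (complex_of_real t - z)^j) \<in> borel_measurable M" by measurable
  have m2: "(\<lambda>t. 1 / (cmod (complex_of_real t - z))^(2*j)) \<in> borel_measurable M" by measurable
  have "L2 M (\<lambda>t. 1 / (complex_of_real t - z)^j) \<longleftrightarrow> integrable M (\<lambda>t. 1 / (cmod (complex_of_real t - z))^(2*j))"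
    using m by (simp add: L2_def norm_inv_pow_sq)
  also have "\<dots> \<longleftrightarrow> (\<integral>\<^sup>+ t. ennreal (1 / (cmod (complex_of_real t - z))^(2*j)) \<partial>M) < \<infinity>"
    using m2 by (simp add: integrable_iff_bounded)
  finally show ?thesis .
qed

lemma eigen_const_zero_if_not_L2:
  assumes s: "shift_eq M z f g c" and g: "AE t in M. g t = 0"
    and Z: "emeasure M {t. complex_of_real t = z} = 0"
    and inf: "(\<integral>\<^sup>+ t. ennreal (1 / (cmod (complex_of_real t - z))^2) \<partial>M) = \<infinity>"
  shows "c = 0"
proof (rule ccontr)
  assume c: "c \<noteq> 0"
  have f: "L2 M f" using s by (simp add: shift_eq_def)
  have ae: "AE t in M. f t = c / (complex_of_real t - z)"
    using shift_eq_off_point[OF s] g AE_ne_null_point[OF Z] by eventually_elim simp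
  have [measurable]: "f \<in> borel_measurable M" using f by (simp add: L2_def)
  have "(\<integral>\<^sup>+ t. ennreal ((cmod (f t))^2) \<partial>M)
      = (\<integral>\<^sup>+ t. ennreal ((cmod c)^2) * ennreal (1 / (cmod (complex_of_real t - z))^2) \<partial>M)"
    by (rule nn_integral_cong_AE) (use ae in \<open>auto elim!: eventually_mono simp: norm_divide power_divide ennreal_mult[symmetric]\<close>)
  also have "\<dots> = ennreal ((cmod c)^2) * (\<integral>\<^sup>+ t. ennreal (1 / (cmod (complex_of_real t - z))^2) \<partial>M)"
    by (rule nn_integral_cmult) measurable
  also have "\<dots> = \<infinity>" using inf c by simp
  finally have "(\<integral>\<^sup>+ t. ennreal ((cmod (f t))^2) \<partial>M) = \<infinity>" .
  moreover have "integrable M (\<lambda>t. (cmod (f t))^2)" using f by (simp add: L2_def)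
  then have "(\<integral>\<^sup>+ t. ennreal (norm ((cmod (f t))^2)) \<partial>M) < \<infinity>" by (simp only: integrable_iff_bounded)
  ultimately show False by simp
qed

lemma eigen_null_at_null_point: assumes s: "shift_eq M z f g 0" and g: "AE t in M. g t = 0"
    and Z: "emeasure M {t. complex_of_real t = z} = 0"
  shows "AE t in M. f t = 0"
  using shift_eq_off_point[OF s] g AE_ne_null_point[OF Z] by eventually_elim simp

lemma eigen_null_if_integral_zero:
  assumes s: "shift_eq M z f g 0" and g: "AE t in M. g t = 0" and i: "integral\<^sup>L M f = 0"
  shows "AE t in M. f t = 0"
proof (cases "emeasure M {t. complex_of_real t = z} = 0")
  case True then show ?thesis using eigen_null_at_null_point[OF s g] by simp
next
  case False
  define r where "r = Re z"
  have z: "z = complex_of_real r" and atom: "emeasure M {r} \<noteq> 0"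
    using real_of_point_mass[OF False] False by (auto simp: r_def)
  have ae: "AE t in M. f t = f r * delta r t"
    using eigen_form_atom[OF z atom shift_eq_cong_rhs[OF s g]] by simp
  have "f r * complex_of_real (measure M {r}) = 0"
    using integral_atomic[OF z atom _ ae] s i by (simp add: shift_eq_def L2_def)
  then have "f r = 0" using measure_atom_pos[OF z atom] by simp
  with ae show ?thesis by simp
qed

end

context Ahat_pair begin

text \<open>Off an atom an eigenvector is \<open>c/(t - z)\<close>; once \<open>c = 0\<close> the atomless side vanishes, so
  its integral is \<open>0\<close>, and the equal-integral condition kills the other side as well.\<close>
lemma no_eigenvalue:
  assumes "z \<in> op_sigma_p Mp Mm A"
    and c0: "\<And>v c. shift_eq Mp z (fst v) (\<lambda>t. 0) c \<Longrightarrow> shift_eq Mm z (snd v) (\<lambda>t. 0) c \<Longrightarrow> c = 0"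
    and Z: "emeasure Mp {t. complex_of_real t = z} = 0 \<or> emeasure Mm {t. complex_of_real t = z} = 0"
  shows False
proof -
  from assms(1) obtain v where v: "v \<in> R z 1" "\<not> vn v" unfolding op_sigma_p_def mem_Collect_eq by blast
  from v(1) have "shift_step z vzero v" using root_1_iff by blast
  then obtain c where c: "shift_eq Mp z (fst v) (\<lambda>t. 0) c" "shift_eq Mm z (snd v) (\<lambda>t. 0) c"
    "integral\<^sup>L Mp (fst v) = integral\<^sup>L Mm (snd v)" by (auto simp: shift_step_def vzero_def)
  have c0': "c = 0" using c0[OF c(1,2)] .
  from Z have "vn v"
  proof
    assume Zp: "emeasure Mp {t. complex_of_real t = z} = 0"
    have 1: "AE t in Mp. fst v t = 0" using P.eigen_null_at_null_point[OF c(1)[unfolded c0'] _ Zp] by simp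
    then have "integral\<^sup>L Mp (fst v) = 0" by (simp add: integral_eq_zero_AE)
    then have "AE t in Mm. snd v t = 0" using N.eigen_null_if_integral_zero[OF c(2)[unfolded c0']] c(3) by simp
    with 1 show "vn v" by (simp add: vnull_def nullf_def)
  next
    assume Zm: "emeasure Mm {t. complex_of_real t = z} = 0"
    have 1: "AE t in Mm. snd v t = 0" using N.eigen_null_at_null_point[OF c(2)[unfolded c0'] _ Zm] by simp
    then have "integral\<^sup>L Mm (snd v) = 0" by (simp add: integral_eq_zero_AE)
    then have "AE t in Mp. fst v t = 0" using P.eigen_null_if_integral_zero[OF c(1)[unfolded c0']] c(3) by simp
    with 1 show "vn v" by (simp add: vnull_def nullf_def)
  qed
  with v(2) show False by simp
qed

lemma A0_not_eigenvalue: assumes "z \<in> A0 Mp \<union> A0 Mm" shows "z \<notin> op_sigma_p Mp Mm A"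
proof
  assume e: "z \<in> op_sigma_p Mp Mm A"
  from assms show False
  proof
    assume z: "z \<in> A0 Mp"
    then have Zp: "emeasure Mp {t. complex_of_real t = z} = 0" and inf: "(\<integral>\<^sup>+ t. ennreal (1 / (cmod (complex_of_real t - z))^2) \<partial>Mp) = \<infinity>"
      using P.sigma_p_Q_iff by (auto simp: A0_def sigma_c_Q_def)
    show False
      by (rule no_eigenvalue[OF e]) (use P.eigen_const_zero_if_not_L2[OF _ _ Zp inf] Zp in auto)
  next
    assume z: "z \<in> A0 Mm"
    then have Zm: "emeasure Mm {t. complex_of_real t = z} = 0" and inf: "(\<integral>\<^sup>+ t. ennreal (1 / (cmod (complex_of_real t - z))^2) \<partial>Mm) = \<infinity>"
      using N.sigma_p_Q_iff by (auto simp: A0_def sigma_c_Q_def)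
    show False
      by (rule no_eigenvalue[OF e]) (use N.eigen_const_zero_if_not_L2[OF _ _ Zm inf] Zm in auto)
  qed
qed

lemma Ap_Ar_not_eigenvalue: assumes "z \<in> (Ap Mp \<inter> Ar Mm) \<union> (Ap Mm \<inter> Ar Mp)" shows "z \<notin> op_sigma_p Mp Mm A"
proof
  assume e: "z \<in> op_sigma_p Mp Mm A"
  from assms show False
  proof
    assume z: "z \<in> Ap Mp \<inter> Ar Mm"
    then have Zp: "emeasure Mp {t. complex_of_real t = z} \<noteq> 0" and Zm: "emeasure Mm {t. complex_of_real t = z} = 0"
      using P.sigma_p_Q_iff N.sigma_p_Q_iff by (auto simp: Ap_def Ar_def)
    from P.real_of_point_mass[OF Zp] have zr: "z = complex_of_real (Re z)" "emeasure Mp {Re z} \<noteq> 0" using Zp by auto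
    show False
    proof (rule no_eigenvalue[OF e])
      fix v c assume "shift_eq Mp z (fst v) (\<lambda>t. 0) c"
      from P.shift_eq_at_atom[OF zr(2) zr(1) this] show "c = 0" by simp
    qed (use Zm in simp)
  next
    assume z: "z \<in> Ap Mm \<inter> Ar Mp"
    then have Zm: "emeasure Mm {t. complex_of_real t = z} \<noteq> 0" and Zp: "emeasure Mp {t. complex_of_real t = z} = 0"
      using P.sigma_p_Q_iff N.sigma_p_Q_iff by (auto simp: Ap_def Ar_def)
    from N.real_of_point_mass[OF Zm] have zr: "z = complex_of_real (Re z)" "emeasure Mm {Re z} \<noteq> 0" using Zm by auto
    show False
    proof (rule no_eigenvalue[OF e])
      fix v c assume "shift_eq Mm z (snd v) (\<lambda>t. 0) c"
      from N.shift_eq_at_atom[OF zr(2) zr(1) this] show "c = 0" by simp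
    qed (use Zp in simp)
  qed
qed

end

lemma is_greatest_from_1:
  fixes P :: "nat \<Rightarrow> bool" assumes P1: "P 1"
  shows "\<exists>K. is_greatest {k. 1 \<le> k \<and> (\<forall>j::nat. 1 \<le> j \<and> enat j \<le> k \<longrightarrow> P j)} K \<and> 1 \<le> K
    \<and> (\<forall>j. 1 \<le> j \<and> enat j \<le> K \<longrightarrow> P j) \<and> (\<forall>k. K = enat k \<longrightarrow> \<not> P (Suc k))"
proof (cases "\<forall>j. 1 \<le> j \<longrightarrow> P j")
  case True
  then show ?thesis by (intro exI[of _ \<infinity>]) (auto simp: is_greatest_def)
next
  case False
  define n where "n = (LEAST j. 1 \<le> j \<and> \<not> P j)"
  have n: "1 \<le> n" "\<not> P n" using LeastI_ex[of "\<lambda>j. 1 \<le> j \<and> \<not> P j"] False unfolding n_def by auto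
  have lt: "\<And>j. 1 \<le> j \<Longrightarrow> j < n \<Longrightarrow> P j" using not_less_Least[of _ "\<lambda>j. 1 \<le> j \<and> \<not> P j"] unfolding n_def by blast
  have n2: "2 \<le> n" using n P1 by (cases "n = 1") auto
  show ?thesis
  proof (intro exI[of _ "enat (n - 1)"] conjI allI impI)
    show "1 \<le> enat (n - 1)" using n2 by (simp add: one_enat_def)
    show "P j" if "1 \<le> j \<and> enat j \<le> enat (n - 1)" for j using that lt by auto
    show "\<not> P (Suc k)" if "enat (n - 1) = enat k" for k using that n n2 by auto
    show "is_greatest {k. 1 \<le> k \<and> (\<forall>j. 1 \<le> j \<and> enat j \<le> k \<longrightarrow> P j)} (enat (n - 1))"
      unfolding is_greatest_def
    proof (intro conjI ballI)
      show "enat (n - 1) \<in> {k. 1 \<le> k \<and> (\<forall>j. 1 \<le> j \<and> enat j \<le> k \<longrightarrow> P j)}"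
        using n2 lt by (auto simp: one_enat_def)
      fix k' assume k': "k' \<in> {k. 1 \<le> k \<and> (\<forall>j. 1 \<le> j \<and> enat j \<le> k \<longrightarrow> P j)}"
      show "k' \<le> enat (n - 1)"
      proof (rule ccontr)
        assume "\<not> k' \<le> enat (n - 1)"
        then have "enat n \<le> k'" using n2 by (cases k') auto
        then have "P n" using k' n by auto
        with n show False by simp
      qed
    qed
  qed
qed

lemma is_greatest_from_2:
  fixes Q :: "nat \<Rightarrow> bool"
  shows "\<exists>K. is_greatest {k. 2 \<le> k \<and> (\<forall>j::nat. 2 \<le> j \<and> enat j \<le> k - 1 \<longrightarrow> Q j)} K \<and> 2 \<le> K
    \<and> (\<forall>j. 2 \<le> j \<and> enat (Suc j) \<le> K \<longrightarrow> Q j) \<and> (\<forall>k. K = enat k \<longrightarrow> \<not> Q k)"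
proof (cases "\<forall>j. 2 \<le> j \<longrightarrow> Q j")
  case True
  then show ?thesis by (intro exI[of _ \<infinity>]) (auto simp: is_greatest_def)
next
  case False
  define n where "n = (LEAST j. 2 \<le> j \<and> \<not> Q j)"
  have n: "2 \<le> n" "\<not> Q n" using LeastI_ex[of "\<lambda>j. 2 \<le> j \<and> \<not> Q j"] False unfolding n_def by auto
  have lt: "\<And>j. 2 \<le> j \<Longrightarrow> j < n \<Longrightarrow> Q j" using not_less_Least[of _ "\<lambda>j. 2 \<le> j \<and> \<not> Q j"] unfolding n_def by blast
  have m1: "enat n - 1 = enat (n - 1)" by (simp add: one_enat_def)
  show ?thesis
  proof (intro exI[of _ "enat n"] conjI allI impI)
    show "2 \<le> enat n" using n by (simp add: numeral_eq_enat)
    show "Q j" if "2 \<le> j \<and> enat (Suc j) \<le> enat n" for j using that lt by auto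
    show "\<not> Q k" if "enat n = enat k" for k using that n by auto
    show "is_greatest {k. 2 \<le> k \<and> (\<forall>j. 2 \<le> j \<and> enat j \<le> k - 1 \<longrightarrow> Q j)} (enat n)"
      unfolding is_greatest_def
    proof (intro conjI ballI)
      show "enat n \<in> {k. 2 \<le> k \<and> (\<forall>j. 2 \<le> j \<and> enat j \<le> k - 1 \<longrightarrow> Q j)}"
        using n lt by (auto simp: m1 numeral_eq_enat)
      fix k' assume k': "k' \<in> {k. 2 \<le> k \<and> (\<forall>j. 2 \<le> j \<and> enat j \<le> k - 1 \<longrightarrow> Q j)}"
      show "k' \<le> enat n"
      proof (rule ccontr)
        assume "\<not> k' \<le> enat n"
        then have "enat n \<le> k' - 1" by (cases k') (auto simp: one_enat_def)
        then have "Q n" using k' n by auto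
        with n show False by simp
      qed
    qed
  qed
qed

section \<open>Regular points\<close>

definition inv_pow :: "complex \<Rightarrow> nat \<Rightarrow> real \<Rightarrow> complex" where
  "inv_pow z j = (\<lambda>t. 1 / (complex_of_real t - z)^j)"

lemma inv_pow_mult: "inv_pow z i t * inv_pow z 1 t = inv_pow z (Suc i) t" by (simp add: inv_pow_def)

lemma inv_pow_Suc_mult: "complex_of_real t \<noteq> z \<Longrightarrow> (complex_of_real t - z) * inv_pow z (Suc j) t = inv_pow z j t"
  by (simp add: inv_pow_def field_simps)

lemma t_inv_pow_Suc: "complex_of_real t \<noteq> z \<Longrightarrow> complex_of_real t * inv_pow z (Suc j) t = inv_pow z j t + z * inv_pow z (Suc j) t"
proof -
  assume a: "complex_of_real t \<noteq> z"
  have "complex_of_real t * inv_pow z (Suc j) t = (complex_of_real t - z) * inv_pow z (Suc j) t + z * inv_pow z (Suc j) t"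
    by (simp add: algebra_simps)
  then show ?thesis using inv_pow_Suc_mult[OF a] by simp
qed

lemma inv_pow_0: "inv_pow z 0 t = 1" by (simp add: inv_pow_def)

context spectral_measure begin

lemma inv_pow_measurable[measurable]: "inv_pow z j \<in> borel_measurable M"
  unfolding inv_pow_def by measurable

lemma L2_inv_pow_iff_off_point:
  assumes "1 \<le> j"
  shows "L2 M (inv_pow z j) \<longleftrightarrow> (\<integral>\<^sup>+ t. indicator {t. complex_of_real t \<noteq> z} t
    * ennreal (1 / (cmod (complex_of_real t - z))^(2*j)) \<partial>M) < \<infinity>"
  using nn_integral_off_point[OF assms] L2_inv_pow_iff by (simp add: inv_pow_def)

context
  fixes z assumes Z0: "emeasure M {t. complex_of_real t = z} = 0"
begin

lemma L2_t_inv_pow: assumes "j \<noteq> 0 \<Longrightarrow> L2 M (inv_pow z j)" "L2 M (inv_pow z (Suc j))"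
  shows "L2 M (\<lambda>t. complex_of_real t * inv_pow z (Suc j) t - (if j = 0 then 1 else 0))"
proof (rule L2_cong)
  show "L2 M (\<lambda>t. (if j = 0 then 0 else inv_pow z j t) + z * inv_pow z (Suc j) t)"
    using assms by (cases "j = 0") (auto intro!: L2_add L2_cmult simp: L2_zero)
  show "(\<lambda>t. complex_of_real t * inv_pow z (Suc j) t - (if j = 0 then 1 else 0)) \<in> borel_measurable M" by measurable
  show "AE t in M. complex_of_real t * inv_pow z (Suc j) t - (if j = 0 then 1 else 0) = (if j = 0 then 0 else inv_pow z j t) + z * inv_pow z (Suc j) t"
    using AE_ne_null_point[OF Z0] by eventually_elim (simp add: t_inv_pow_Suc inv_pow_0)
qed

lemma shift_eq_inv_pow: assumes "j \<noteq> 0 \<Longrightarrow> L2 M (inv_pow z j)" "L2 M (inv_pow z (Suc j))"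
  shows "shift_eq M z (inv_pow z (Suc j)) (if j = 0 then (\<lambda>t. 0) else inv_pow z j) (if j = 0 then 1 else 0)"
  unfolding shift_eq_def
proof (intro conjI)
  show "L2 M (inv_pow z (Suc j))" by fact
  show "L2 M (\<lambda>t. complex_of_real t * inv_pow z (Suc j) t - (if j = 0 then 1 else 0))" by (rule L2_t_inv_pow[OF assms])
  show "AE t in M. (complex_of_real t - z) * inv_pow z (Suc j) t - (if j = 0 then 1 else 0) = (if j = 0 then (\<lambda>t. 0) else inv_pow z j) t"
    using AE_ne_null_point[OF Z0] by eventually_elim (simp add: inv_pow_Suc_mult inv_pow_0)
qed

lemma integrable_inv_pow: assumes "j \<noteq> 0 \<Longrightarrow> L2 M (inv_pow z j)" "L2 M (inv_pow z (Suc j))" shows "integrable M (inv_pow z (Suc j))"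
  using shift_eq_integrable[OF shift_eq_inv_pow[OF assms]] .

lemma eigen_form_regular: assumes "shift_eq M z f (\<lambda>t. 0) c" shows "AE t in M. f t = c * inv_pow z 1 t"
  using shift_eq_off_point[OF assms] AE_ne_null_point[OF Z0] by eventually_elim (simp add: inv_pow_def)

lemma shift_eq_inv_pow_form: assumes "shift_eq M z f (inv_pow z k) c" shows "AE t in M. f t = inv_pow z (Suc k) t + c * inv_pow z 1 t"
  using shift_eq_off_point[OF assms] AE_ne_null_point[OF Z0]
proof eventually_elim
  case (elim t)
  then have "f t = inv_pow z k t / (complex_of_real t - z) + c / (complex_of_real t - z)"
    by (simp add: add_divide_distrib)
  moreover have "inv_pow z k t / (complex_of_real t - z) = inv_pow z (Suc k) t" by (simp add: inv_pow_def)
  moreover have "c / (complex_of_real t - z) = c * inv_pow z 1 t" by (simp add: inv_pow_def)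
  ultimately show ?case by simp
qed

lemma shift_eq_next_inv_pow:
  assumes s: "shift_eq M z f (inv_pow z k) c" and L1: "L2 M (inv_pow z 1)" and i1: "integrable M (inv_pow z 1)"
  shows "L2 M (inv_pow z (Suc k))
    \<and> integral\<^sup>L M (inv_pow z (Suc k)) = integral\<^sup>L M f - c * integral\<^sup>L M (inv_pow z 1)"
proof -
  have ae: "AE t in M. f t = inv_pow z (Suc k) t + c * inv_pow z 1 t" by (rule shift_eq_inv_pow_form[OF s])
  have Lf: "L2 M f" using s by (simp add: shift_eq_def)
  have mf: "f \<in> borel_measurable M" using Lf by (simp add: L2_def)
  have "L2 M (inv_pow z (Suc k))"
    by (rule L2_cong[OF L2_diff[OF Lf L2_cmult[OF L1, of c]]]) (simp, use ae in \<open>auto elim: eventually_mono\<close>)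
  moreover have "integral\<^sup>L M (inv_pow z (Suc k)) = (\<integral> t. f t - c * inv_pow z 1 t \<partial>M)"
    by (rule integral_cong_AE) (use mf ae in \<open>auto elim: eventually_mono\<close>)
  moreover have "\<dots> = integral\<^sup>L M f - c * integral\<^sup>L M (inv_pow z 1)"
    using shift_eq_integrable[OF s] i1 by simp
  ultimately show ?thesis by simp
qed

lemma inv_pow_not_null: "\<not> (AE t in M. inv_pow z j t = 0)"
proof
  assume "AE t in M. inv_pow z j t = 0"
  with AE_ne_null_point[OF Z0] have "AE t in M. False" by eventually_elim (simp add: inv_pow_def)
  then show False by (rule AE_False_absurd)
qed

end

end

locale regular_point = Ahat_pair +
  fixes z :: complex
  assumes null_p: "emeasure Mp {t. complex_of_real t = z} = 0"
    and null_m: "emeasure Mm {t. complex_of_real t = z} = 0"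
begin

definition balanced :: "nat \<Rightarrow> bool" where
  "balanced j \<longleftrightarrow> L2 Mp (inv_pow z j) \<and> L2 Mm (inv_pow z j)
     \<and> integral\<^sup>L Mm (inv_pow z j) = integral\<^sup>L Mp (inv_pow z j)"

lemma eigenvector_regular:
  assumes "shift_step z vzero v"
  obtains c where "AE t in Mp. fst v t = c * inv_pow z 1 t" "AE t in Mm. snd v t = c * inv_pow z 1 t"
    "c * integral\<^sup>L Mp (inv_pow z 1) = c * integral\<^sup>L Mm (inv_pow z 1)"
proof -
  obtain c where c: "shift_eq Mp z (fst v) (\<lambda>t. 0) c" "shift_eq Mm z (snd v) (\<lambda>t. 0) c"
    "integral\<^sup>L Mp (fst v) = integral\<^sup>L Mm (snd v)" using assms by (auto simp: shift_step_def vzero_def)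
  have ae: "AE t in Mp. fst v t = c * inv_pow z 1 t" "AE t in Mm. snd v t = c * inv_pow z 1 t"
    using P.eigen_form_regular[OF null_p c(1)] N.eigen_form_regular[OF null_m c(2)] .
  have mv: "fst v \<in> borel_measurable Mp" "snd v \<in> borel_measurable Mm"
    using c by (auto simp: shift_eq_def L2_def)
  have "integral\<^sup>L Mp (fst v) = c * integral\<^sup>L Mp (inv_pow z 1)"
    by (subst integral_cong_AE[OF mv(1) _ ae(1)]) simp_all
  moreover have "integral\<^sup>L Mm (snd v) = c * integral\<^sup>L Mm (inv_pow z 1)"
    by (subst integral_cong_AE[OF mv(2) _ ae(2)]) simp_all
  ultimately show ?thesis using c(3) by (intro that[OF ae]) auto
qed

lemma regular_eigenvalue_integral_eq:
  assumes "z \<in> op_sigma_p Mp Mm A"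
  shows "integral\<^sup>L Mp (inv_pow z 1) = integral\<^sup>L Mm (inv_pow z 1)"
proof -
  from assms obtain v where v: "shift_step z vzero v" "\<not> vn v"
    unfolding op_sigma_p_def using root_1_iff by blast
  from eigenvector_regular[OF v(1)] obtain c where
    c: "AE t in Mp. fst v t = c * inv_pow z 1 t" "AE t in Mm. snd v t = c * inv_pow z 1 t"
       "c * integral\<^sup>L Mp (inv_pow z 1) = c * integral\<^sup>L Mm (inv_pow z 1)" .
  have "c \<noteq> 0"
  proof
    assume "c = 0"
    then have "AE t in Mp. fst v t = 0" "AE t in Mm. snd v t = 0" using c(1,2) by auto
    with v(2) show False by (simp add: vnull_def nullf_def)
  qed
  with c(3) show ?thesis by simp
qed

text \<open>If \<open>(\<widehat>A - z) x = ((t - z)\<^sup>-\<^sup>k, (t - z)\<^sup>-\<^sup>k)\<close>, then \<open>x = (t - z)\<^sup>-\<^sup>k\<^sup>-\<^sup>1 + c (t - z)\<^sup>-\<^sup>1\<close> on both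
  sides, so the chain can be continued exactly when the next power is balanced.\<close>
lemma regular_chain_continues:
  assumes b1: "balanced 1" and x: "shift_step z (inv_pow z k, inv_pow z k) x"
  shows "balanced (Suc k)"
proof -
  obtain c where c: "shift_eq Mp z (fst x) (inv_pow z k) c" "shift_eq Mm z (snd x) (inv_pow z k) c"
    "integral\<^sup>L Mp (fst x) = integral\<^sup>L Mm (snd x)" using x by (auto simp: shift_step_def)
  have L1: "L2 Mp (inv_pow z 1)" "L2 Mm (inv_pow z 1)" using b1 by (auto simp: balanced_def)
  have ip1: "integrable Mp (inv_pow z 1)" "integrable Mm (inv_pow z 1)"
    using P.integrable_inv_pow[OF null_p, of 0] N.integrable_inv_pow[OF null_m, of 0] L1 by simp_all
  have next_p: "L2 Mp (inv_pow z (Suc k)) \<and>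
      integral\<^sup>L Mp (inv_pow z (Suc k)) = integral\<^sup>L Mp (fst x) - c * integral\<^sup>L Mp (inv_pow z 1)"
    using P.shift_eq_next_inv_pow[OF null_p c(1) L1(1) ip1(1)] .
  have next_m: "L2 Mm (inv_pow z (Suc k)) \<and>
      integral\<^sup>L Mm (inv_pow z (Suc k)) = integral\<^sup>L Mm (snd x) - c * integral\<^sup>L Mm (inv_pow z 1)"
    using N.shift_eq_next_inv_pow[OF null_m c(2) L1(2) ip1(2)] .
  show ?thesis using next_p next_m c(3) b1 by (simp add: balanced_def)
qed

lemma regular_jordan_chain:
  assumes b1: "balanced 1" and K: "1 \<le> K" "\<And>j. 1 \<le> j \<Longrightarrow> enat j \<le> K \<Longrightarrow> balanced j"
    "\<And>k. K = enat k \<Longrightarrow> \<not> balanced (Suc k)"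
  shows "jordan_chain Mp Mm A z (\<lambda>j. (inv_pow z j, inv_pow z j)) K"
proof (rule jordan_chain.intro[OF Ahat_pair_axioms], rule jordan_chain_axioms.intro)
  let ?e = "\<lambda>j. (inv_pow z j, inv_pow z j)"
  have L1: "L2 Mp (inv_pow z 1)" "L2 Mm (inv_pow z 1)" using b1 by (auto simp: balanced_def)
  show "1 \<le> K" by (fact K(1))
  show "shift_step z vzero (?e 1)"
    unfolding shift_step_def vzero_def fst_conv snd_conv
    using P.shift_eq_inv_pow[OF null_p, of 0] N.shift_eq_inv_pow[OF null_m, of 0] L1 b1
    by (intro exI[of _ 1]) (simp add: balanced_def)
  show "\<not> vn (?e 1)" using P.inv_pow_not_null[OF null_p] by (simp add: vnull_def nullf_def)
  show "\<exists>\<alpha>. veq v (vsum {1} (\<lambda>_. \<alpha>) ?e)" if "shift_step z vzero v" for v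
  proof -
    from eigenvector_regular[OF that] obtain c where
      "AE t in Mp. fst v t = c * inv_pow z 1 t" "AE t in Mm. snd v t = c * inv_pow z 1 t" .
    then have "veq v (vsum {1} (\<lambda>_. c) ?e)"
      by (auto simp: vnull_def nullf_def vdiff_def vsum_def elim!: eventually_mono)
    then show ?thesis by blast
  qed
  show "shift_step z (?e j) (?e (Suc j))" if j: "1 \<le> j" "enat (Suc j) \<le> K" for j
  proof -
    have "enat j \<le> K" using j(2) by (meson Suc_ile_eq order_less_imp_le)
    then have "balanced j" "balanced (Suc j)" using K(2) j by auto
    then show ?thesis
      unfolding shift_step_def fst_conv snd_conv balanced_def
      using P.shift_eq_inv_pow[OF null_p, of j] N.shift_eq_inv_pow[OF null_m, of j] j(1)
      by (intro exI[of _ 0]) simp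
  qed
  show "\<not> shift_step z (?e k) x" if "K = enat k" for k x
    using regular_chain_continues[OF b1] K(3)[OF that] by blast
qed

end

lemma (in Ahat_pair) regular_point_spectrum:
  assumes z: "z \<in> Ar Mp \<inter> Ar Mm"
  defines "P \<equiv> (\<lambda>j::nat. (\<integral>\<^sup>+ t. ennreal (1 / (cmod (complex_of_real t - z))^(2*j)) \<partial>Mp) < \<infinity>
                \<and> (\<integral>\<^sup>+ t. ennreal (1 / (cmod (complex_of_real t - z))^(2*j)) \<partial>Mm) < \<infinity>
                \<and> (\<integral> t. 1 / (complex_of_real t - z)^j \<partial>Mm)
                  = (\<integral> t. 1 / (complex_of_real t - z)^j \<partial>Mp))"
  shows "(z \<in> op_sigma_p Mp Mm A \<longleftrightarrow>
          (\<integral> t. 1 / (complex_of_real t - z) \<partial>Mp) = (\<integral> t. 1 / (complex_of_real t - z) \<partial>Mm))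
     \<and> (z \<in> op_sigma_p Mp Mm A \<longrightarrow>
          geom_mult Mp Mm A z = 1
        \<and> is_greatest {k. 1 \<le> k \<and> (\<forall>j::nat. 1 \<le> j \<and> enat j \<le> k \<longrightarrow> P j)} (alg_mult Mp Mm A z))"
proof -
  have Zp: "emeasure Mp {t. complex_of_real t = z} = 0" and Zm: "emeasure Mm {t. complex_of_real t = z} = 0"
    using z P.sigma_p_Q_iff N.sigma_p_Q_iff by (auto simp: Ar_def)
  interpret regular_point Mp Mm A z
    by (rule regular_point.intro[OF Ahat_pair_axioms regular_point_axioms.intro[OF Zp Zm]])
  have P_iff: "P = balanced"
    by (auto simp: fun_eq_iff P_def balanced_def inv_pow_def P.L2_inv_pow_iff N.L2_inv_pow_iff)
  have balanced_1: "balanced 1 \<longleftrightarrow>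
      (\<integral> t. 1 / (complex_of_real t - z) \<partial>Mp) = (\<integral> t. 1 / (complex_of_real t - z) \<partial>Mm)"
  proof -
    have "L2 Mp (inv_pow z 1)" "L2 Mm (inv_pow z 1)"
      using z P.L2_inv_pow_iff[of z 1] N.L2_inv_pow_iff[of z 1] by (auto simp: Ar_def inv_pow_def)
    then show ?thesis unfolding balanced_def by (auto simp: inv_pow_def)
  qed
  have chain: "\<exists>K. jordan_chain Mp Mm A z (\<lambda>j. (inv_pow z j, inv_pow z j)) K
      \<and> is_greatest {k. 1 \<le> k \<and> (\<forall>j::nat. 1 \<le> j \<and> enat j \<le> k \<longrightarrow> P j)} K" if b1: "balanced 1"
  proof -
    obtain K where K: "is_greatest {k. 1 \<le> k \<and> (\<forall>j::nat. 1 \<le> j \<and> enat j \<le> k \<longrightarrow> P j)} K" "1 \<le> K"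
      "\<And>j. 1 \<le> j \<Longrightarrow> enat j \<le> K \<Longrightarrow> P j" "\<And>k. K = enat k \<Longrightarrow> \<not> P (Suc k)"
      using is_greatest_from_1[of P] b1 unfolding P_iff by blast
    then show ?thesis using regular_jordan_chain[OF b1] unfolding P_iff by blast
  qed
  show ?thesis
  proof (intro conjI impI iffI)
    show "z \<in> op_sigma_p Mp Mm A \<Longrightarrow>
        (\<integral> t. 1 / (complex_of_real t - z) \<partial>Mp) = (\<integral> t. 1 / (complex_of_real t - z) \<partial>Mm)"
      using regular_eigenvalue_integral_eq by (simp add: inv_pow_def)
    assume "(\<integral> t. 1 / (complex_of_real t - z) \<partial>Mp) = (\<integral> t. 1 / (complex_of_real t - z) \<partial>Mm)"
    then show "z \<in> op_sigma_p Mp Mm A" using chain balanced_1 jordan_chain.eigenvalue by blast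
  next
    assume "z \<in> op_sigma_p Mp Mm A"
    then have "balanced 1" using regular_eigenvalue_integral_eq balanced_1 by (simp add: inv_pow_def)
    then obtain K where K: "jordan_chain Mp Mm A z (\<lambda>j. (inv_pow z j, inv_pow z j)) K"
      "is_greatest {k. 1 \<le> k \<and> (\<forall>j::nat. 1 \<le> j \<and> enat j \<le> k \<longrightarrow> P j)} K" using chain by blast
    show "geom_mult Mp Mm A z = 1" using jordan_chain.geom_mult_eq[OF K(1)] .
    show "is_greatest {k. 1 \<le> k \<and> (\<forall>j::nat. 1 \<le> j \<and> enat j \<le> k \<longrightarrow> P j)} (alg_mult Mp Mm A z)"
      using jordan_chain.alg_mult_eq[OF K(1)] K(2) by simp
  qed
qed

section \<open>Common atoms\<close>

definition atom_vec :: "complex \<Rightarrow> real \<Rightarrow> complex \<Rightarrow> nat \<Rightarrow> real \<Rightarrow> complex" where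
  "atom_vec z r q j = (\<lambda>t. - inv_pow z j t + q * delta r t)"

context spectral_measure begin

context
  fixes r z assumes zr: "z = complex_of_real r" and atom: "emeasure M {r} \<noteq> 0"
begin

lemma inv_pow_at_atom: "1 \<le> j \<Longrightarrow> inv_pow z j r = 0"
  by (simp add: inv_pow_def zr)

lemma t_inv_pow_Suc_atom: "1 \<le> j \<Longrightarrow> complex_of_real t * inv_pow z (Suc j) t = inv_pow z j t + z * inv_pow z (Suc j) t"
  by (cases "t = r") (simp_all add: t_inv_pow_Suc ne_atom_iff[OF zr atom] inv_pow_at_atom)

lemma t_inv_pow_1_atom: "complex_of_real t * inv_pow z 1 t - 1 = z * inv_pow z 1 t - delta r t"
proof (cases "t = r")
  case True then show ?thesis by (simp add: inv_pow_at_atom)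
next
  case False
  then have "complex_of_real t * inv_pow z (Suc 0) t = inv_pow z 0 t + z * inv_pow z (Suc 0) t"
    by (intro t_inv_pow_Suc) (simp add: ne_atom_iff[OF zr atom])
  then show ?thesis using False by (simp add: inv_pow_0)
qed

lemma integrable_inv_pow_atom: assumes "L2 M (inv_pow z (Suc j))" "j \<noteq> 0 \<Longrightarrow> L2 M (inv_pow z j)"
  shows "integrable M (inv_pow z (Suc j))"
proof (cases "j = 0")
  case True
  have e: "(\<lambda>t. complex_of_real t * inv_pow z (Suc j) t - 1) = (\<lambda>t. z * inv_pow z (Suc j) t - delta r t)"
    using True t_inv_pow_1_atom by simp
  have "L2 M (\<lambda>t. complex_of_real t * inv_pow z (Suc j) t - 1)"
    unfolding e using L2_diff[OF L2_cmult[OF assms(1), of z] L2_delta] .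
  then show ?thesis using L2_graph_integrable[OF assms(1)] by blast
next
  case False
  have "L2 M (\<lambda>t. complex_of_real t * inv_pow z (Suc j) t - 0)"
    using L2_add[OF assms(2)[OF False] L2_cmult[OF assms(1), of z]] False by (simp add: t_inv_pow_Suc_atom)
  then show ?thesis using L2_graph_integrable[OF assms(1)] by blast
qed

lemma shift_eq_off_atom: assumes "shift_eq M z f g c"
  shows "AE t in M. t \<noteq> r \<longrightarrow> f t = (g t + c) * inv_pow z 1 t"
  using shift_eq_off_point[OF assms] by eventually_elim (auto simp: ne_atom_iff[OF zr atom] inv_pow_def)

lemma shift_eq_delta: "shift_eq M z (\<lambda>t. a * delta r t) (\<lambda>t. 0) 0"
  unfolding shift_eq_def
proof (intro conjI)
  show "L2 M (\<lambda>t. a * delta r t)" by (rule L2_cmult[OF L2_delta])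
  show "L2 M (\<lambda>t. complex_of_real t * (a * delta r t) - 0)"
  proof -
    have "(\<lambda>t. complex_of_real t * (a * delta r t) - 0) = (\<lambda>t. (a * complex_of_real r) * delta r t)"
    proof
      fix t show "complex_of_real t * (a * delta r t) - 0 = (a * complex_of_real r) * delta r t"
        by (cases "t = r") simp_all
    qed
    then show ?thesis using L2_cmult[OF L2_delta, of "a * complex_of_real r"] by simp
  qed
  show "AE t in M. (complex_of_real t - z) * (a * delta r t) - 0 = 0"
  proof (rule AE_I2)
    fix t show "(complex_of_real t - z) * (a * delta r t) - 0 = 0" by (cases "t = r") (simp_all add: zr)
  qed
qed

lemma shift_eq_atom_vec_1: assumes "L2 M (inv_pow z 1)" shows "shift_eq M z (atom_vec z r q 1) (delta r) (-1)"
  unfolding shift_eq_def atom_vec_def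
proof (intro conjI)
  show "L2 M (\<lambda>t. - inv_pow z 1 t + q * delta r t)" by (intro L2_add L2_uminus L2_cmult assms L2_delta)
  have "L2 M (\<lambda>t. delta r t - z * inv_pow z 1 t + (q * complex_of_real r) * delta r t)"
    by (intro L2_add L2_diff L2_cmult assms L2_delta)
  moreover have "(\<lambda>t. delta r t - z * inv_pow z 1 t + (q * complex_of_real r) * delta r t)
      = (\<lambda>t. complex_of_real t * (- inv_pow z 1 t + q * delta r t) - - 1)"
  proof
    fix t
    show "delta r t - z * inv_pow z 1 t + (q * complex_of_real r) * delta r t = complex_of_real t * (- inv_pow z 1 t + q * delta r t) - - 1"
    proof (cases "t = r")
      case True then show ?thesis by (simp add: inv_pow_at_atom)
    next
      case False
      have "complex_of_real t * inv_pow z (Suc 0) t = inv_pow z 0 t + z * inv_pow z (Suc 0) t"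
        by (intro t_inv_pow_Suc) (simp add: ne_atom_iff[OF zr atom] False)
      then show ?thesis using False by (simp add: inv_pow_0 algebra_simps)
    qed
  qed
  ultimately show "L2 M (\<lambda>t. complex_of_real t * (- inv_pow z 1 t + q * delta r t) - - 1)" by simp
  show "AE t in M. (complex_of_real t - z) * (- inv_pow z 1 t + q * delta r t) - - 1 = delta r t"
  proof (rule AE_I2)
    fix t show "(complex_of_real t - z) * (- inv_pow z 1 t + q * delta r t) - - 1 = delta r t"
    proof (cases "t = r")
      case True then show ?thesis by (simp add: zr)
    next
      case False
      then have "(complex_of_real t - z) * inv_pow z (Suc 0) t = inv_pow z 0 t" by (intro inv_pow_Suc_mult) (simp add: ne_atom_iff[OF zr atom])
      then show ?thesis using False by (simp add: algebra_simps inv_pow_0)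
    qed
  qed
qed

lemma shift_eq_atom_vec_Suc: assumes "1 \<le> i" "L2 M (inv_pow z i)" "L2 M (inv_pow z (Suc i))"
  shows "shift_eq M z (atom_vec z r q (Suc i)) (atom_vec z r 0 i) 0"
  unfolding shift_eq_def atom_vec_def
proof (intro conjI)
  show "L2 M (\<lambda>t. - inv_pow z (Suc i) t + q * delta r t)" by (intro L2_add L2_uminus L2_cmult assms L2_delta)
  have "L2 M (\<lambda>t. - inv_pow z i t - z * inv_pow z (Suc i) t + (q * complex_of_real r) * delta r t)"
    by (intro L2_add L2_diff L2_uminus L2_cmult assms L2_delta)
  moreover have "(\<lambda>t. - inv_pow z i t - z * inv_pow z (Suc i) t + (q * complex_of_real r) * delta r t)
      = (\<lambda>t. complex_of_real t * (- inv_pow z (Suc i) t + q * delta r t) - 0)"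
  proof
    fix t
    show "- inv_pow z i t - z * inv_pow z (Suc i) t + (q * complex_of_real r) * delta r t = complex_of_real t * (- inv_pow z (Suc i) t + q * delta r t) - 0"
    proof (cases "t = r")
      case True then show ?thesis using inv_pow_at_atom[OF assms(1)] inv_pow_at_atom[of "Suc i"] by simp
    next
      case False
      then show ?thesis using t_inv_pow_Suc_atom[OF assms(1), of t] by (simp add: algebra_simps)
    qed
  qed
  ultimately show "L2 M (\<lambda>t. complex_of_real t * (- inv_pow z (Suc i) t + q * delta r t) - 0)" by simp
  show "AE t in M. (complex_of_real t - z) * (- inv_pow z (Suc i) t + q * delta r t) - 0 = - inv_pow z i t + 0 * delta r t"
  proof (rule AE_I2)
    fix t show "(complex_of_real t - z) * (- inv_pow z (Suc i) t + q * delta r t) - 0 = - inv_pow z i t + 0 * delta r t"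
    proof (cases "t = r")
      case True then show ?thesis using inv_pow_at_atom[OF assms(1)] by (simp add: zr)
    next
      case False
      then have "(complex_of_real t - z) * inv_pow z (Suc i) t = inv_pow z i t" by (intro inv_pow_Suc_mult) (simp add: ne_atom_iff[OF zr atom])
      then show ?thesis using False by (simp add: algebra_simps)
    qed
  qed
qed

lemma L2_inv_pow_1_of_shift_eq_delta:
  assumes s: "shift_eq M z f (\<lambda>t. a * delta r t) c" and c: "c \<noteq> 0"
  shows "L2 M (inv_pow z 1)"
proof (rule L2_cong)
  have "L2 M f" using s by (simp add: shift_eq_def)
  then show "L2 M (\<lambda>t. (1 / c) * (f t - f r * delta r t))"
    by (intro L2_cmult L2_diff L2_delta)
  show "AE t in M. inv_pow z 1 t = 1 / c * (f t - f r * delta r t)"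
    using shift_eq_off_atom[OF s]
  proof eventually_elim
    case (elim t)
    then show ?case using inv_pow_at_atom[of 1] c by (cases "t = r") simp_all
  qed
qed simp

lemma L2_inv_pow_Suc_of_shift_eq_atom_vec:
  assumes s: "shift_eq M z f (atom_vec z r q i) 0"
  shows "L2 M (inv_pow z (Suc i))"
proof (rule L2_cong)
  have "L2 M f" using s by (simp add: shift_eq_def)
  then show "L2 M (\<lambda>t. - (f t - f r * delta r t))"
    by (intro L2_uminus L2_diff L2_cmult L2_delta)
  show "AE t in M. inv_pow z (Suc i) t = - (f t - f r * delta r t)"
    using shift_eq_off_atom[OF s]
  proof eventually_elim
    case (elim t)
    then show ?case
      using inv_pow_at_atom[of "Suc i"] inv_pow_mult[of z i t] by (cases "t = r") (simp_all add: atom_vec_def)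
  qed
qed simp

lemma integral_atom_vec: assumes "integrable M (inv_pow z j)"
  shows "integral\<^sup>L M (atom_vec z r q j) = - integral\<^sup>L M (inv_pow z j) + q * complex_of_real (measure M {r})"
  unfolding atom_vec_def using assms integrable_delta integral_delta by simp

end
end


locale common_atom = Ahat_pair +
  fixes r :: real and z :: complex
  assumes z_eq: "z = complex_of_real r"
    and atom_p: "emeasure Mp {r} \<noteq> 0" and atom_m: "emeasure Mm {r} \<noteq> 0"
begin

abbreviation "mp \<equiv> measure Mp {r}"
abbreviation "mm \<equiv> measure Mm {r}"

lemma mass_pos: "mp > 0" "mm > 0"
  using P.measure_atom_pos[OF z_eq atom_p] N.measure_atom_pos[OF z_eq atom_m] by simp_all

lemma eigenvector_atom:
  assumes "shift_step z vzero v"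
  obtains a b where "AE t in Mp. fst v t = a * delta r t" "AE t in Mm. snd v t = b * delta r t"
    "a * complex_of_real mp = b * complex_of_real mm"
proof -
  from assms obtain c where c: "shift_eq Mp z (fst v) (\<lambda>t. 0) c" "shift_eq Mm z (snd v) (\<lambda>t. 0) c"
    "integral\<^sup>L Mp (fst v) = integral\<^sup>L Mm (snd v)" by (auto simp: shift_step_def vzero_def)
  have ae: "AE t in Mp. fst v t = fst v r * delta r t" "AE t in Mm. snd v t = snd v r * delta r t"
    using P.eigen_form_atom[OF z_eq atom_p c(1)] N.eigen_form_atom[OF z_eq atom_m c(2)] by auto
  have mv: "fst v \<in> borel_measurable Mp" "snd v \<in> borel_measurable Mm"
    using c by (auto simp: shift_eq_def L2_def)
  have "fst v r * complex_of_real mp = snd v r * complex_of_real mm"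
    using P.integral_atomic[OF z_eq atom_p mv(1) ae(1)] N.integral_atomic[OF z_eq atom_m mv(2) ae(2)] c(3)
    by simp
  with ae show ?thesis by (rule that)
qed

lemma delta_not_null: "a \<noteq> 0 \<Longrightarrow> \<not> vn ((\<lambda>t. a * delta r t), g)"
  using P.AE_at_atom[OF atom_p, of "\<lambda>t. a * delta r t = 0"] by (auto simp: vnull_def nullf_def)

text \<open>The eigenvector \<open>(\<delta>/d\<Sigma>\<^sub>+({r}), \<delta>/d\<Sigma>\<^sub>-({r}))\<close> has no successor unless the masses agree and
  \<open>(t - z)\<^sup>-\<^sup>1\<close> is square integrable on both sides.\<close>
lemma atom_simple_chain:
  assumes not_degenerate: "\<not> (mp = mm \<and> L2 Mp (inv_pow z 1) \<and> L2 Mm (inv_pow z 1))"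
  shows "jordan_chain Mp Mm A z
    (\<lambda>_. ((\<lambda>t. complex_of_real (1 / mp) * delta r t), (\<lambda>t. complex_of_real (1 / mm) * delta r t))) 1"
    (is "jordan_chain _ _ _ _ ?e _")
proof (rule jordan_chain.intro[OF Ahat_pair_axioms], rule jordan_chain_axioms.intro)
  show "1 \<le> (1::enat)" by simp
  show "shift_step z vzero (?e 1)"
    unfolding shift_step_def vzero_def fst_conv snd_conv
    using P.shift_eq_delta[OF z_eq atom_p, of "complex_of_real (1 / mp)"]
      N.shift_eq_delta[OF z_eq atom_m, of "complex_of_real (1 / mm)"]
      P.integral_delta N.integral_delta mass_pos
    by (intro exI[of _ 0]) simp
  show "\<not> vn (?e 1)" by (rule delta_not_null) (use mass_pos in simp)
  show "\<exists>\<alpha>. veq v (vsum {1} (\<lambda>_. \<alpha>) ?e)" if "shift_step z vzero v" for v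
  proof -
    from eigenvector_atom[OF that] obtain a b where ab: "AE t in Mp. fst v t = a * delta r t"
      "AE t in Mm. snd v t = b * delta r t" "a * complex_of_real mp = b * complex_of_real mm" .
    have b: "b = a * complex_of_real mp * complex_of_real (1 / mm)" using ab(3) mass_pos by (simp add: field_simps)
    have a: "a = a * complex_of_real mp * complex_of_real (1 / mp)" using mass_pos by (simp add: field_simps)
    have "AE t in Mp. fst v t - (a * complex_of_real mp) * (complex_of_real (1 / mp) * delta r t) = 0"
      using ab(1) by eventually_elim (subst (asm) a, simp add: algebra_simps)
    moreover have "AE t in Mm. snd v t - (a * complex_of_real mp) * (complex_of_real (1 / mm) * delta r t) = 0"
      using ab(2) by eventually_elim (simp add: b algebra_simps)
    ultimately have "veq v (vsum {1} (\<lambda>_. a * complex_of_real mp) ?e)"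
      by (simp add: vnull_def nullf_def vdiff_def vsum_def)
    then show ?thesis by blast
  qed
  show "shift_step z (?e j) (?e (Suc j))" if "1 \<le> j" "enat (Suc j) \<le> 1" for j
    using that by (simp add: one_enat_def)
  show "\<not> shift_step z (?e k) x" if "(1::enat) = enat k" for k x
  proof
    assume "shift_step z (?e k) x"
    then obtain c where c: "shift_eq Mp z (fst x) (\<lambda>t. complex_of_real (1 / mp) * delta r t) c"
      "shift_eq Mm z (snd x) (\<lambda>t. complex_of_real (1 / mm) * delta r t) c" by (auto simp: shift_step_def)
    have cp: "complex_of_real (1 / mp) = - c" using P.shift_eq_at_atom[OF atom_p z_eq c(1)] by simp
    have cm: "complex_of_real (1 / mm) = - c" using N.shift_eq_at_atom[OF atom_m z_eq c(2)] by simp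
    have "mp = mm" using cp cm mass_pos by (metis divide_cancel_left of_real_eq_iff zero_neq_one)
    moreover have "c \<noteq> 0" using cp mass_pos by auto
    ultimately show False
      using not_degenerate P.L2_inv_pow_1_of_shift_eq_delta[OF z_eq atom_p c(1)]
        N.L2_inv_pow_1_of_shift_eq_delta[OF z_eq atom_m c(2)] by simp
  qed
qed

definition atom_cond :: "nat \<Rightarrow> bool" where
  "atom_cond j \<longleftrightarrow> L2 Mp (inv_pow z j) \<and> L2 Mm (inv_pow z j)
     \<and> integral\<^sup>L Mm (inv_pow z (j - 1)) = integral\<^sup>L Mp (inv_pow z (j - 1))"

text \<open>The point-mass correction \<open>atom_corr j\<close> keeps \<open>\<integral>e\<^sub>+ = \<integral>e\<^sub>-\<close> along the chain; it
  vanishes exactly when the integral part of \<open>atom_cond (j + 1)\<close> holds.\<close>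
definition atom_corr :: "nat \<Rightarrow> complex" where
  "atom_corr j = (integral\<^sup>L Mm (inv_pow z j) - integral\<^sup>L Mp (inv_pow z j)) / complex_of_real mp"

definition atom_chain :: "nat \<Rightarrow> vec" where
  "atom_chain j = (if j \<le> 1 then (delta r, delta r)
     else (atom_vec z r 0 (j - 1), atom_vec z r (atom_corr (j - 1)) (j - 1)))"

lemma atom_chain_step:
  assumes mpm: "mp = mm" and j: "1 \<le> j"
    and L: "\<And>i. 1 \<le> i \<Longrightarrow> i \<le> j \<Longrightarrow> L2 Mp (inv_pow z i) \<and> L2 Mm (inv_pow z i)"
    and prev: "2 \<le> j \<Longrightarrow> integral\<^sup>L Mm (inv_pow z (j - 1)) = integral\<^sup>L Mp (inv_pow z (j - 1))"
  shows "shift_step z (atom_chain j) (atom_chain (Suc j))"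
proof -
  have m0: "complex_of_real mp \<noteq> 0" using mass_pos by simp
  have es: "atom_chain (Suc j) = (atom_vec z r 0 j, atom_vec z r (atom_corr j) j)"
    using j by (simp add: atom_chain_def)
  have prevL: "L2 Mp (inv_pow z (j - 1)) \<and> L2 Mm (inv_pow z (j - 1))" if "2 \<le> j"
    using L[of "j - 1"] that by simp
  have Lj: "L2 Mp (inv_pow z j)" "L2 Mm (inv_pow z j)" using L[of j] j by auto
  have I: "integrable Mp (inv_pow z j)" "integrable Mm (inv_pow z j)"
    using P.integrable_inv_pow_atom[OF z_eq atom_p, of "j - 1"] N.integrable_inv_pow_atom[OF z_eq atom_m, of "j - 1"]
      Lj j prevL by (auto simp: Suc_le_eq)
  have ieq: "integral\<^sup>L Mp (atom_vec z r 0 j) = integral\<^sup>L Mm (atom_vec z r (atom_corr j) j)"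
    using P.integral_atom_vec[OF z_eq atom_p I(1), of 0] N.integral_atom_vec[OF z_eq atom_m I(2), of "atom_corr j"] mpm m0
    by (simp add: atom_corr_def)
  show ?thesis
  proof (cases "j = 1")
    case True
    then have "atom_chain j = (delta r, delta r)" by (simp add: atom_chain_def)
    then show ?thesis unfolding shift_step_def es fst_conv snd_conv
      using P.shift_eq_atom_vec_1[OF z_eq atom_p, of 0] N.shift_eq_atom_vec_1[OF z_eq atom_m, of "atom_corr j"]
        Lj True ieq by (intro exI[of _ "-1"]) simp
  next
    case False
    define i where "i = j - 1"
    have i: "j = Suc i" "1 \<le> i" using False j by (auto simp: i_def)
    have j2: "2 \<le> j" using False j by simp
    have "atom_corr i = 0" using prev[OF j2] m0 by (simp add: atom_corr_def i_def)
    then have ej: "atom_chain j = (atom_vec z r 0 i, atom_vec z r 0 i)" using i by (simp add: atom_chain_def)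
    have Li: "L2 Mp (inv_pow z i)" "L2 Mm (inv_pow z i)" using prevL[OF j2] by (simp_all add: i_def)
    show ?thesis unfolding shift_step_def es ej fst_conv snd_conv
      using P.shift_eq_atom_vec_Suc[OF z_eq atom_p i(2) Li(1), of 0]
        N.shift_eq_atom_vec_Suc[OF z_eq atom_m i(2) Li(2), of "atom_corr j"] Lj i ieq
      by (intro exI[of _ 0]) simp
  qed
qed

lemma atom_chain_maximal:
  assumes "2 \<le> k" and x: "shift_step z (atom_chain k) x"
  shows "atom_cond k"
proof -
  define i where "i = k - 1"
  have i: "k = Suc i" "1 \<le> i" using assms(1) by (auto simp: i_def)
  have ek: "atom_chain k = (atom_vec z r 0 i, atom_vec z r (atom_corr i) i)"
    using assms(1) by (simp add: atom_chain_def i_def)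
  from x obtain c where c: "shift_eq Mp z (fst x) (atom_vec z r 0 i) c"
    "shift_eq Mm z (snd x) (atom_vec z r (atom_corr i) i) c" by (auto simp: shift_step_def ek)
  have "atom_vec z r 0 i r = - c" using P.shift_eq_at_atom[OF atom_p z_eq c(1)] .
  then have c0: "c = 0" using P.inv_pow_at_atom[OF z_eq atom_p i(2)] by (simp add: atom_vec_def)
  have "atom_vec z r (atom_corr i) i r = - c" using N.shift_eq_at_atom[OF atom_m z_eq c(2)] .
  then have "atom_corr i = 0" using P.inv_pow_at_atom[OF z_eq atom_p i(2)] c0 by (simp add: atom_vec_def)
  then have "integral\<^sup>L Mm (inv_pow z i) = integral\<^sup>L Mp (inv_pow z i)" using mass_pos by (simp add: atom_corr_def)
  then show ?thesis
    using P.L2_inv_pow_Suc_of_shift_eq_atom_vec[OF z_eq atom_p c(1)[unfolded c0]]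
      N.L2_inv_pow_Suc_of_shift_eq_atom_vec[OF z_eq atom_m c(2)[unfolded c0]] i(1)
    by (simp add: atom_cond_def)
qed

lemma atom_degenerate_chain:
  assumes mpm: "mp = mm" and L1: "L2 Mp (inv_pow z 1)" "L2 Mm (inv_pow z 1)"
    and K: "2 \<le> K" "\<And>j. 2 \<le> j \<Longrightarrow> enat (Suc j) \<le> K \<Longrightarrow> atom_cond j"
      "\<And>k. K = enat k \<Longrightarrow> \<not> atom_cond k"
  shows "jordan_chain Mp Mm A z atom_chain K"
proof (rule jordan_chain.intro[OF Ahat_pair_axioms], rule jordan_chain_axioms.intro)
  show "1 \<le> K" using K(1) by (metis one_le_numeral order_trans)
  show "shift_step z vzero (atom_chain 1)"
    unfolding shift_step_def atom_chain_def vzero_def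
    using P.shift_eq_delta[OF z_eq atom_p, of 1] N.shift_eq_delta[OF z_eq atom_m, of 1]
      P.integral_delta N.integral_delta mpm
    by (intro exI[of _ 0]) simp
  show "\<not> vn (atom_chain 1)" using delta_not_null[of 1 "delta r"] by (simp add: atom_chain_def)
  show "\<exists>\<alpha>. veq v (vsum {1} (\<lambda>_. \<alpha>) atom_chain)" if "shift_step z vzero v" for v
  proof -
    from eigenvector_atom[OF that] obtain a b where ab: "AE t in Mp. fst v t = a * delta r t"
      "AE t in Mm. snd v t = b * delta r t" "a * complex_of_real mp = b * complex_of_real mm" .
    have "b = a" using ab(3) mpm mass_pos by simp
    then have "veq v (vsum {1} (\<lambda>_. a) atom_chain)"
      using ab(1,2) by (auto simp: vnull_def nullf_def vdiff_def vsum_def atom_chain_def elim!: eventually_mono)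
    then show ?thesis by blast
  qed
  show "shift_step z (atom_chain j) (atom_chain (Suc j))" if j: "1 \<le> j" "enat (Suc j) \<le> K" for j
  proof (rule atom_chain_step[OF mpm j(1)])
    show "integral\<^sup>L Mm (inv_pow z (j - 1)) = integral\<^sup>L Mp (inv_pow z (j - 1))" if "2 \<le> j"
      using K(2) that j(2) by (auto simp: atom_cond_def)
    fix i assume i: "1 \<le> i" "i \<le> j"
    show "L2 Mp (inv_pow z i) \<and> L2 Mm (inv_pow z i)"
    proof (cases "i = 1")
      case False
      have "enat (Suc i) \<le> K" using i(2) j(2) by (auto intro: order_trans[of _ "enat (Suc j)"])
      then show ?thesis using K(2)[of i] False i(1) by (auto simp: atom_cond_def)
    qed (use L1 in simp)
  qed
  show "\<not> shift_step z (atom_chain k) x" if k: "K = enat k" for k x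
  proof
    assume "shift_step z (atom_chain k) x"
    moreover have "2 \<le> k" using K(1) k by (simp add: numeral_eq_enat)
    ultimately show False using atom_chain_maximal K(3)[OF k] by blast
  qed
qed

end

lemma (in Ahat_pair) common_atom_spectrum:
  assumes z: "z \<in> Ap Mp \<inter> Ap Mm"
  defines "degenerate \<equiv> emeasure Mm {t. complex_of_real t = z} = emeasure Mp {t. complex_of_real t = z}
             \<and> (\<integral>\<^sup>+ t. indicator {t. complex_of_real t \<noteq> z} t
                    * ennreal (1 / (cmod (complex_of_real t - z))^2) \<partial>Mp) < \<infinity>
             \<and> (\<integral>\<^sup>+ t. indicator {t. complex_of_real t \<noteq> z} t
                    * ennreal (1 / (cmod (complex_of_real t - z))^2) \<partial>Mm) < \<infinity>"
    and "Q \<equiv> (\<lambda>j::nat. (\<integral>\<^sup>+ t. indicator {t. complex_of_real t \<noteq> z} t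
                      * ennreal (1 / (cmod (complex_of_real t - z))^(2*j)) \<partial>Mp) < \<infinity>
                \<and> (\<integral>\<^sup>+ t. indicator {t. complex_of_real t \<noteq> z} t
                      * ennreal (1 / (cmod (complex_of_real t - z))^(2*j)) \<partial>Mm) < \<infinity>
                \<and> set_lebesgue_integral Mm {t. complex_of_real t \<noteq> z}
                      (\<lambda>t. 1 / (complex_of_real t - z)^(j-1))
                  = set_lebesgue_integral Mp {t. complex_of_real t \<noteq> z}
                      (\<lambda>t. 1 / (complex_of_real t - z)^(j-1)))"
  shows "(z \<in> op_sigma_p Mp Mm A \<and> geom_mult Mp Mm A z = 1)
     \<and> (simple_eig Mp Mm A z \<longleftrightarrow> \<not> degenerate)
     \<and> (degenerate \<longrightarrow> is_greatest {k. 2 \<le> k \<and> (\<forall>j::nat. 2 \<le> j \<and> enat j \<le> k - 1 \<longrightarrow> Q j)} (alg_mult Mp Mm A z))"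
proof -
  have Zp: "emeasure Mp {t. complex_of_real t = z} \<noteq> 0" and Zm: "emeasure Mm {t. complex_of_real t = z} \<noteq> 0"
    using z P.sigma_p_Q_iff N.sigma_p_Q_iff by (auto simp: Ap_def)
  define r where "r = Re z"
  have zr: "z = complex_of_real r" and Zr: "{t. complex_of_real t = z} = {r}"
    using P.real_of_point_mass[OF Zp] by (auto simp: r_def)
  have ap: "emeasure Mp {r} \<noteq> 0" and am: "emeasure Mm {r} \<noteq> 0" using Zp Zm Zr by auto
  interpret common_atom Mp Mm A r z
    by (rule common_atom.intro[OF Ahat_pair_axioms common_atom_axioms.intro[OF zr ap am]])
  have L2_1: "L2 Mp (inv_pow z 1) \<longleftrightarrow> (\<integral>\<^sup>+ t. indicator {t. complex_of_real t \<noteq> z} t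
                    * ennreal (1 / (cmod (complex_of_real t - z))^2) \<partial>Mp) < \<infinity>"
    "L2 Mm (inv_pow z 1) \<longleftrightarrow> (\<integral>\<^sup>+ t. indicator {t. complex_of_real t \<noteq> z} t
                    * ennreal (1 / (cmod (complex_of_real t - z))^2) \<partial>Mm) < \<infinity>"
    using P.L2_inv_pow_iff_off_point[of 1 z] N.L2_inv_pow_iff_off_point[of 1 z] by simp_all
  have degenerate_iff: "degenerate \<longleftrightarrow> mp = mm \<and> L2 Mp (inv_pow z 1) \<and> L2 Mm (inv_pow z 1)"
    unfolding degenerate_def Zr L2_1
    using mass_pos P.emeasure_singleton_finite[of r] N.emeasure_singleton_finite[of r]
    by (auto simp: emeasure_eq_ennreal_measure less_top)
  have Q_iff: "Q j \<longleftrightarrow> atom_cond j" if "2 \<le> j" for j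
  proof -
    have j: "1 \<le> j" "1 \<le> j - 1" using that by auto
    show ?thesis
      unfolding Q_def atom_cond_def P.L2_inv_pow_iff_off_point[OF j(1)] N.L2_inv_pow_iff_off_point[OF j(1)]
      using set_integral_off_point[OF j(2), of Mp] set_integral_off_point[OF j(2), of Mm] by (simp add: inv_pow_def)
  qed
  show ?thesis
  proof (cases degenerate)
    case False
    then have ch: "jordan_chain Mp Mm A z
        (\<lambda>_. ((\<lambda>t. complex_of_real (1 / mp) * delta r t), (\<lambda>t. complex_of_real (1 / mm) * delta r t))) 1"
      using atom_simple_chain degenerate_iff by blast
    show ?thesis using jordan_chain.eigenvalue[OF ch] jordan_chain.geom_mult_eq[OF ch]
        jordan_chain.alg_mult_eq[OF ch] False by (simp add: simple_eig_def)
  next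
    case True
    obtain K where K: "is_greatest {k. 2 \<le> k \<and> (\<forall>j::nat. 2 \<le> j \<and> enat j \<le> k - 1 \<longrightarrow> Q j)} K" "2 \<le> K"
      "\<And>j. 2 \<le> j \<Longrightarrow> enat (Suc j) \<le> K \<Longrightarrow> Q j" "\<And>k. K = enat k \<Longrightarrow> \<not> Q k"
      using is_greatest_from_2[of Q] by blast
    have "\<not> atom_cond k" if "K = enat k" for k
      using K(2,4) Q_iff that by (auto simp: numeral_eq_enat)
    then have ch: "jordan_chain Mp Mm A z atom_chain K"
      using atom_degenerate_chain True K(2,3) Q_iff unfolding degenerate_iff by blast
    have "alg_mult Mp Mm A z = K" using jordan_chain.alg_mult_eq[OF ch] .
    moreover have "K \<noteq> 1" using K(2) by (auto simp: one_enat_def numeral_eq_enat)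
    ultimately show ?thesis using jordan_chain.eigenvalue[OF ch] jordan_chain.geom_mult_eq[OF ch] K(1) True
      by (simp add: simple_eig_def)
  qed
qed

lemma spectral_measure_admissible: "admissible S C \<Longrightarrow> spectral_measure (LS_measure S)"
  unfolding admissible_def spectral_measure_def LS_measure_def by simp

lemma Ahat_pair_admissible:
  assumes "admissible Sp Cp" "admissible Sm Cm"
  shows "Ahat_pair (LS_measure Sp) (LS_measure Sm) (Ahat Sp Cp Sm Cm)"
proof (intro Ahat_pair.intro measure_pair.intro Ahat_pair_axioms.intro)
  show sp: "spectral_measure (LS_measure Sp)" and sm: "spectral_measure (LS_measure Sm)"
    using assms by (simp_all add: spectral_measure_admissible)
  show "((fp, fm), gp, gm) \<in> Ahat Sp Cp Sm Cm \<longleftrightarrow> (\<exists>c. Tstar_graph (LS_measure Sp) fp gp c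
      \<and> Tstar_graph (LS_measure Sm) fm gm c \<and> integral\<^sup>L (LS_measure Sp) fp = integral\<^sup>L (LS_measure Sm) fm)"
    for fp fm gp gm
    using Ahat_iff[OF sp sm] assms by (simp add: admissible_def)
qed

theorem theorem3p1:
  fixes Sp Sm :: "real \<Rightarrow> real" and Cp Cm :: real
  defines "Mp \<equiv> LS_measure Sp" and "Mm \<equiv> LS_measure Sm"
      and "A \<equiv> Ahat Sp Cp Sm Cm"
  assumes hp: "admissible Sp Cp" and hm: "admissible Sm Cm"
  shows
   "(\<forall>z. z \<in> A0 Mp \<union> A0 Mm \<longrightarrow> z \<notin> op_sigma_p Mp Mm A)
  \<and> (\<forall>z. z \<in> Ap Mp \<inter> Ap Mm \<longrightarrow>
       (z \<in> op_sigma_p Mp Mm A \<and> geom_mult Mp Mm A z = 1)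
     \<and> (simple_eig Mp Mm A z \<longleftrightarrow>
          \<not> (emeasure Mm {t. complex_of_real t = z} = emeasure Mp {t. complex_of_real t = z}
             \<and> (\<integral>\<^sup>+ t. indicator {t. complex_of_real t \<noteq> z} t
                    * ennreal (1 / (cmod (complex_of_real t - z))^2) \<partial>Mp) < \<infinity>
             \<and> (\<integral>\<^sup>+ t. indicator {t. complex_of_real t \<noteq> z} t
                    * ennreal (1 / (cmod (complex_of_real t - z))^2) \<partial>Mm) < \<infinity>))
     \<and> ((emeasure Mm {t. complex_of_real t = z} = emeasure Mp {t. complex_of_real t = z}
             \<and> (\<integral>\<^sup>+ t. indicator {t. complex_of_real t \<noteq> z} t
                    * ennreal (1 / (cmod (complex_of_real t - z))^2) \<partial>Mp) < \<infinity>
             \<and> (\<integral>\<^sup>+ t. indicator {t. complex_of_real t \<noteq> z} t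
                    * ennreal (1 / (cmod (complex_of_real t - z))^2) \<partial>Mm) < \<infinity>)
        \<longrightarrow> is_greatest
              {k :: enat. 2 \<le> k \<and> (\<forall>j::nat. 2 \<le> j \<and> enat j \<le> k - 1 \<longrightarrow>
                  (\<integral>\<^sup>+ t. indicator {t. complex_of_real t \<noteq> z} t
                      * ennreal (1 / (cmod (complex_of_real t - z))^(2*j)) \<partial>Mp) < \<infinity>
                \<and> (\<integral>\<^sup>+ t. indicator {t. complex_of_real t \<noteq> z} t
                      * ennreal (1 / (cmod (complex_of_real t - z))^(2*j)) \<partial>Mm) < \<infinity>
                \<and> set_lebesgue_integral Mm {t. complex_of_real t \<noteq> z}
                      (\<lambda>t. 1 / (complex_of_real t - z)^(j-1))
                  = set_lebesgue_integral Mp {t. complex_of_real t \<noteq> z}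
                      (\<lambda>t. 1 / (complex_of_real t - z)^(j-1)))}
              (alg_mult Mp Mm A z)))
  \<and> (\<forall>z. z \<in> Ar Mp \<inter> Ar Mm \<longrightarrow>
       (z \<in> op_sigma_p Mp Mm A \<longleftrightarrow>
          (\<integral> t. 1 / (complex_of_real t - z) \<partial>Mp) = (\<integral> t. 1 / (complex_of_real t - z) \<partial>Mm))
     \<and> (z \<in> op_sigma_p Mp Mm A \<longrightarrow>
          geom_mult Mp Mm A z = 1
        \<and> is_greatest
              {k :: enat. 1 \<le> k \<and> (\<forall>j::nat. 1 \<le> j \<and> enat j \<le> k \<longrightarrow>
                  (\<integral>\<^sup>+ t. ennreal (1 / (cmod (complex_of_real t - z))^(2*j)) \<partial>Mp) < \<infinity>
                \<and> (\<integral>\<^sup>+ t. ennreal (1 / (cmod (complex_of_real t - z))^(2*j)) \<partial>Mm) < \<infinity>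
                \<and> (\<integral> t. 1 / (complex_of_real t - z)^j \<partial>Mm)
                  = (\<integral> t. 1 / (complex_of_real t - z)^j \<partial>Mp))}
              (alg_mult Mp Mm A z)))
  \<and> (\<forall>z. z \<in> (Ap Mp \<inter> Ar Mm) \<union> (Ap Mm \<inter> Ar Mp) \<longrightarrow> z \<notin> op_sigma_p Mp Mm A)"
proof -
  have "Ahat_pair Mp Mm A" unfolding Mp_def Mm_def A_def by (rule Ahat_pair_admissible[OF hp hm])
  then interpret Ahat_pair Mp Mm A .
  show ?thesis
    using A0_not_eigenvalue common_atom_spectrum regular_point_spectrum Ap_Ar_not_eigenvalue
    by (intro conjI allI impI) blast+
qed

end
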